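(* Let $p\ge2$, $f\in\mathcal H_0$, $u$ the solution of $\partial_tu+\partial J(u)\ni0$, $u(0)=f$, $\lambda:=\lambda_1\|f\|^{p-2}$, $a(t)=(1+(p-2)\lambda t)^{-\frac1{p-2}}$ if $p>2$ and $a(t)=e^{-\lambda t}$ if $p=2$, $w(t):=u(t)/a(t)$ for $t\ge0$, and $\Lambda(t):=pJ(u(t))/\|u(t)\|^p$. If $p>2$, then for every $\delta>0$ $$\frac{\lambda_1\|u(\delta)\|^{p-2}}{\Lambda(\delta)}\le\|w(t)\|^{p-2}\le\|f\|^{p-2},\qquad t\ge\delta,$$ where $\delta=0$ is admissible if $J(f)<\infty$. If $p=2$, then $t\mapsto\|w(t)\|$ is non-increasing and in particular $\|w(t)\|\le\|w(0)\|=\|f\|$ for all $t\ge0$.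
   Context: $\mathcal H$ is a real Hilbert space with inner product $\langle\cdot,\cdot\rangle$ and norm $\|\cdot\|$. $J:\mathcal H\to\mathbb R\cup\{\infty\}$ is convex, lower semicontinuous, proper, with dense effective domain, and absolutely $p$-homogeneous: $J(cu)=|c|^pJ(u)$ for $c\ne0$, $J(0)=0$. Standing coercivity assumption: $\lambda_1:=\inf_{u\in\mathcal H_0}pJ(u)/\|u\|^p>0$. $\partial J(u)=\{\zeta: J(u)+\langle\zeta,v-u\rangle\le J(v)\ \forall v\}$; $\mathcal N(J)=\{u:J(u)=0\}$; $\mathcal H_0:=\mathcal N(J)^\perp\setminus\{0\}$. The gradient flow solution (Brezis) is the unique continuous $u:[0,\infty)\to\mathcal H$, Lipschitz on $[\delta,\infty)$ for all $\delta>0$, right-differentiable on $(0,\infty)$ with $u(0)=f$ and $\partial_t^+u(t)=-\zeta(t)$, $\zeta(t)$ the minimal-norm element of $\partial J(u(t))$. The function $a$ solves $a'=-\lambda a^{p-1}$, $a(0)=1$. *)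

theory Defs
  imports "HOL-Analysis.Analysis"
begin

definition convex_fun :: "('a::real_vector \<Rightarrow> ereal) \<Rightarrow> bool" where
  "convex_fun J \<longleftrightarrow> (\<forall>x y. \<forall>\<theta>::real. 0 \<le> \<theta> \<and> \<theta> \<le> 1 \<longrightarrow>
      J ((1 - \<theta>) *\<^sub>R x + \<theta> *\<^sub>R y) \<le> ereal (1 - \<theta>) * J x + ereal \<theta> * J y)"

definition lsc_fun :: "('a::topological_space \<Rightarrow> ereal) \<Rightarrow> bool" where
  "lsc_fun J \<longleftrightarrow> (\<forall>c. closed {x. J x \<le> c})"

definition proper_fun :: "('a \<Rightarrow> ereal) \<Rightarrow> bool" where
  "proper_fun J \<longleftrightarrow> (\<forall>x. J x \<noteq> -\<infinity>) \<and> (\<exists>x. J x \<noteq> \<infinity>)"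

definition dom_fun :: "('a \<Rightarrow> ereal) \<Rightarrow> 'a set" where
  "dom_fun J = {x. J x < \<infinity>}"

definition abs_homogeneous :: "real \<Rightarrow> ('a::real_vector \<Rightarrow> ereal) \<Rightarrow> bool" where
  "abs_homogeneous p J \<longleftrightarrow> J 0 = 0 \<and>
     (\<forall>c u. c \<noteq> 0 \<longrightarrow> J (c *\<^sub>R u) = ereal (\<bar>c\<bar> powr p) * J u)"

definition subdiff :: "('a::real_inner \<Rightarrow> ereal) \<Rightarrow> 'a \<Rightarrow> 'a set" where
  "subdiff J u = {\<zeta>. \<forall>v. J u + ereal (\<zeta> \<bullet> (v - u)) \<le> J v}"

definition null_set :: "('a \<Rightarrow> ereal) \<Rightarrow> 'a set" where
  "null_set J = {u. J u = 0}"

definition H0 :: "('a::real_inner \<Rightarrow> ereal) \<Rightarrow> 'a set" where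
  "H0 J = {u. \<forall>v\<in>null_set J. u \<bullet> v = 0} - {0}"

definition lambda1 :: "real \<Rightarrow> ('a::real_inner \<Rightarrow> ereal) \<Rightarrow> ereal" where
  "lambda1 p J = (INF u\<in>H0 J. ereal p * J u / ereal (norm u powr p))"

definition min_norm_elem :: "'a::real_normed_vector \<Rightarrow> 'a set \<Rightarrow> bool" where
  "min_norm_elem z S \<longleftrightarrow> z \<in> S \<and> (\<forall>y\<in>S. norm z \<le> norm y)"

text \<open>Brezis gradient-flow solution of  u' + dJ(u) \<ni> 0,  u(0) = f.\<close>
definition gradient_flow :: "('a::real_inner \<Rightarrow> ereal) \<Rightarrow> 'a \<Rightarrow> (real \<Rightarrow> 'a) \<Rightarrow> bool" where
  "gradient_flow J f u \<longleftrightarrow>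
     continuous_on {0..} u \<and>
     (\<forall>\<delta>>0. \<exists>L. L-lipschitz_on {\<delta>..} u) \<and>
     u 0 = f \<and>
     (\<forall>t>0. \<exists>\<zeta>. min_norm_elem \<zeta> (subdiff J (u t)) \<and>
        (u has_vector_derivative - \<zeta>) (at_right t))"

text \<open>The Rayleigh quotient Lambda(t) = p J(u(t)) / norm(u(t))^p (used where J(u(t)) is finite).\<close>
definition rayleigh :: "real \<Rightarrow> ('a::real_normed_vector \<Rightarrow> ereal) \<Rightarrow> 'a \<Rightarrow> real" where
  "rayleigh p J v = p * real_of_ereal (J v) / norm v powr p"

definition a_fun :: "real \<Rightarrow> real \<Rightarrow> real \<Rightarrow> real" where
  "a_fun p lam t = (if p = 2 then exp (- lam * t)
                    else (1 + (p - 2) * lam * t) powr (- 1 / (p - 2)))"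

end

theory Submission
  imports Defs
begin

text \<open>
  Along the flow, every subgradient \<open>\<zeta>\<close> of the \<open>p\<close>-homogeneous functional satisfies
  \<open>\<zeta> \<bullet> u = p J(u)\<close>, so \<open>norm u\<^sup>2\<close> has right derivative \<open>- 2 p J(u)\<close>. Coercivity gives
  \<open>p J(u) \<ge> \<lambda>\<^sub>1 norm u powr p\<close>: thus \<open>norm u\<close> is a subsolution of the Bernoulli equation
  \<open>y' = - \<lambda>\<^sub>1 y powr (p - 1)\<close>, whose solution through \<open>norm f\<close> is \<open>norm f * a(t)\<close>, and
  \<open>norm (w t) \<le> norm f\<close>. Conversely, the Rayleigh quotient \<open>p J(u) / norm u powr p\<close> is
  nonincreasing (by Cauchy-Schwarz, once one knows that \<open>norm \<zeta>\<close> decreases and that \<open>\<zeta>\<close> is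
  right-continuous), so after time \<open>\<delta>\<close> the norm is a supersolution with rate \<open>\<Lambda>(\<delta>)\<close>, which gives
  the lower bound. Only one-sided derivatives are available, so every monotonicity argument
  goes through a Dini-derivative version of the mean value theorem.
\<close>

section \<open>Monotonicity from right Dini derivatives\<close>

lemma has_vector_derivative_imp_difference_quotient:
  fixes u :: "real \<Rightarrow> 'a::real_normed_vector"
  assumes "(u has_vector_derivative D) (at t within S)"
  shows "((\<lambda>s. (1 / (s - t)) *\<^sub>R (u s - u t)) \<longlongrightarrow> D) (at t within S)"
proof -
  have "((\<lambda>s. norm ((u s - u t) - (s - t) *\<^sub>R D) / norm (s - t)) \<longlongrightarrow> 0) (at t within S)"
    using assms unfolding has_vector_derivative_def has_derivative_iff_norm by auto
  moreover have "\<forall>\<^sub>F s in at t within S.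
      norm ((u s - u t) - (s - t) *\<^sub>R D) / norm (s - t) = norm ((1 / (s - t)) *\<^sub>R (u s - u t) - D)"
  proof (unfold eventually_at_filter, intro always_eventually allI impI)
    fix s assume "s \<noteq> t"
    then have "(1 / (s - t)) *\<^sub>R (u s - u t) - D = (1 / (s - t)) *\<^sub>R ((u s - u t) - (s - t) *\<^sub>R D)"
      by (simp add: scaleR_diff_right)
    then show "norm ((u s - u t) - (s - t) *\<^sub>R D) / norm (s - t) = norm ((1 / (s - t)) *\<^sub>R (u s - u t) - D)"
      by (simp add: divide_inverse_commute)
  qed
  ultimately have "((\<lambda>s. (1 / (s - t)) *\<^sub>R (u s - u t) - D) \<longlongrightarrow> 0) (at t within S)"
    by (auto intro: tendsto_norm_zero_cancel dest: tendsto_cong[THEN iffD1, rotated])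
  then show ?thesis
    by (simp add: LIM_zero_iff)
qed

lemma has_real_derivative_inner_const:
  fixes v :: "real \<Rightarrow> 'a::real_inner"
  assumes "(v has_vector_derivative D) F"
  shows "((\<lambda>s. v s \<bullet> n) has_real_derivative D \<bullet> n) F"
  using has_derivative_inner_left[OF assms[unfolded has_vector_derivative_def], of n]
  unfolding has_field_derivative_def by (simp add: mult.commute[of _ "D \<bullet> n"])

lemma has_real_derivative_norm_sq:
  fixes v :: "real \<Rightarrow> 'a::real_inner"
  assumes "(v has_vector_derivative D) (at x within S)"
  shows "((\<lambda>s. (norm (v s))\<^sup>2) has_real_derivative 2 * (D \<bullet> v x)) (at x within S)"
proof -
  have "((\<lambda>s. v s \<bullet> v s) has_derivative (\<lambda>h. v x \<bullet> (h *\<^sub>R D) + (h *\<^sub>R D) \<bullet> v x)) (at x within S)"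
    using assms[unfolded has_vector_derivative_def] assms[unfolded has_vector_derivative_def]
    by (rule has_derivative_inner)
  then show ?thesis
    unfolding has_field_derivative_def power2_norm_eq_inner
    by (rule has_derivative_eq_rhs) (auto simp: fun_eq_iff inner_commute)
qed

lemma right_dini_le_of_quotient_bound:
  fixes F Q :: "real \<Rightarrow> real"
  assumes "(Q \<longlongrightarrow> L) (at_right x)" "L < e"
    and "\<forall>\<^sub>F y in at_right x. F y - F x \<le> (y - x) * Q y"
  shows "\<forall>\<^sub>F y in at_right x. F y \<le> F x + e * (y - x)"
  using order_tendstoD(2)[OF assms(1,2)] assms(3) eventually_at_right_less
proof eventually_elim
  case (elim y)
  then have "(y - x) * Q y \<le> (y - x) * e" by (intro mult_left_mono) auto
  with elim show ?case by (simp add: algebra_simps)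
qed

lemma right_usc_of_quotient_bound:
  fixes F Q :: "real \<Rightarrow> real"
  assumes "(Q \<longlongrightarrow> L) (at_right x)"
    and "\<forall>\<^sub>F y in at_right x. F y - F x \<le> (y - x) * Q y" "F x < c"
  shows "\<forall>\<^sub>F y in at_right x. F y < c"
proof -
  have "((\<lambda>y. (y - x) * Q y) \<longlongrightarrow> (x - x) * L) (at_right x)"
    by (intro tendsto_intros assms(1))
  then have "\<forall>\<^sub>F y in at_right x. (y - x) * Q y < c - F x"
    using assms(3) by (intro order_tendstoD(2)) auto
  with assms(2) show ?thesis by eventually_elim simp
qed

lemma right_dini_le_of_derivative:
  fixes F :: "real \<Rightarrow> real"
  assumes "(F has_real_derivative L) (at_right x)" "L < e"
  shows "\<forall>\<^sub>F y in at_right x. F y \<le> F x + e * (y - x)"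
proof (rule right_dini_le_of_quotient_bound)
  show "((\<lambda>y. (F y - F x) / (y - x)) \<longlongrightarrow> L) (at_right x)"
    using assms(1) by (simp add: has_field_derivative_iff)
  show "\<forall>\<^sub>F y in at_right x. F y - F x \<le> (y - x) * ((F y - F x) / (y - x))"
    using eventually_at_right_less by eventually_elim simp
qed fact

lemma real_induction:
  fixes a b :: real
  assumes "a \<le> b" "P a"
    and step: "\<And>x. a \<le> x \<Longrightarrow> x < b \<Longrightarrow> P x \<Longrightarrow> \<forall>\<^sub>F y in at_right x. P y"
    and limit: "\<And>x. a < x \<Longrightarrow> x \<le> b \<Longrightarrow> (\<And>y. a \<le> y \<Longrightarrow> y < x \<Longrightarrow> P y) \<Longrightarrow> P x"
  shows "P b"
proof -
  define S where "S = {x. a \<le> x \<and> x \<le> b \<and> (\<forall>y. a \<le> y \<longrightarrow> y \<le> x \<longrightarrow> P y)}"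
  define c where "c = Sup S"
  have "a \<in> S" using assms(1,2) by (auto simp: S_def)
  have bdd: "bdd_above S" by (auto simp: S_def bdd_above_def)
  have le_c: "x \<le> c" if "x \<in> S" for x using cSup_upper[OF that bdd] by (simp add: c_def)
  have "a \<le> c" "c \<le> b" using le_c[OF \<open>a \<in> S\<close>] \<open>a \<in> S\<close> by (auto simp: c_def S_def intro!: cSup_least)
  have below: "P y" if y: "a \<le> y" "y < c" for y
  proof -
    obtain x where "x \<in> S" "y < x" using less_cSup_iff[OF _ bdd, of y] \<open>a \<in> S\<close> y(2) c_def by auto
    with y(1) show ?thesis by (auto simp: S_def)
  qed
  have "P c"
  proof (cases "a = c")
    case False
    with \<open>a \<le> c\<close> have "a < c" by simp
    from limit[OF this \<open>c \<le> b\<close> below] show ?thesis .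
  qed (use assms(2) in simp)
  have "c = b"
  proof (rule ccontr)
    assume "c \<noteq> b"
    with \<open>c \<le> b\<close> have "c < b" by simp
    from step[OF \<open>a \<le> c\<close> this \<open>P c\<close>] obtain d where "c < d" and right: "\<And>y. c < y \<Longrightarrow> y < d \<Longrightarrow> P y"
      by (auto simp: eventually_at_right_field)
    define x where "x = min b ((c + d) / 2)"
    have "c < x" "x < d" "x \<le> b" using \<open>c < b\<close> \<open>c < d\<close> by (auto simp: x_def min_def)
    have "P y" if "a \<le> y" "y \<le> x" for y
      using below[OF that(1)] \<open>P c\<close> right[of y] \<open>x < d\<close> that(2) by (cases y c rule: linorder_cases) auto
    then have "x \<in> S" using \<open>a \<le> c\<close> \<open>c < x\<close> \<open>x \<le> b\<close> by (auto simp: S_def)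
    with le_c[of x] \<open>c < x\<close> show False by simp
  qed
  with \<open>P c\<close> show ?thesis by simp
qed

lemma nonincreasing_by_right_dini:
  fixes F :: "real \<Rightarrow> real"
  assumes "a \<le> b"
    and lsc: "\<And>x c. a < x \<Longrightarrow> x \<le> b \<Longrightarrow> c < F x \<Longrightarrow> \<forall>\<^sub>F y in at_left x. c < F y"
    and usc: "\<And>c. F a < c \<Longrightarrow> \<forall>\<^sub>F y in at_right a. F y < c"
    and dini: "\<And>x e. a < x \<Longrightarrow> x < b \<Longrightarrow> 0 < e \<Longrightarrow> \<forall>\<^sub>F y in at_right x. F y \<le> F x + e * (y - x)"
  shows "F b \<le> F a"
proof (rule field_le_epsilon)
  fix E :: real assume "0 < E"
  define \<epsilon> where "\<epsilon> = E / (b - a + 1)"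
  have "0 < \<epsilon>" using \<open>a \<le> b\<close> \<open>0 < E\<close> by (simp add: \<epsilon>_def)
  define B where "B x = F a + \<epsilon> * (x - a) + \<epsilon>" for x
  have "F b \<le> B b"
  proof (rule real_induction[OF \<open>a \<le> b\<close>])
    show "F a \<le> B a" using \<open>0 < \<epsilon>\<close> by (simp add: B_def)
  next
    fix x assume x: "a \<le> x" "x < b" "F x \<le> B x"
    show "\<forall>\<^sub>F y in at_right x. F y \<le> B y"
    proof (cases "a = x")
      case True
      have "\<forall>\<^sub>F y in at_right x. F y < F a + \<epsilon>" using usc \<open>0 < \<epsilon>\<close> True by simp
      with eventually_at_right_less show ?thesis
      proof eventually_elim
        case (elim y)
        then have "0 \<le> \<epsilon> * (y - a)" using True \<open>0 < \<epsilon>\<close> by simp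
        with elim show ?case using True by (simp add: B_def)
      qed
    next
      case False
      with x have "\<forall>\<^sub>F y in at_right x. F y \<le> F x + \<epsilon> * (y - x)" using dini \<open>0 < \<epsilon>\<close> by simp
      then show ?thesis by eventually_elim (use x(3) in \<open>simp add: B_def algebra_simps\<close>)
    qed
  next
    fix x assume x: "a < x" "x \<le> b" and below: "\<And>y. a \<le> y \<Longrightarrow> y < x \<Longrightarrow> F y \<le> B y"
    show "F x \<le> B x"
    proof (rule ccontr)
      assume "\<not> F x \<le> B x"
      then have "\<forall>\<^sub>F y in at_left x. B x < F y" using lsc[OF x] by simp
      moreover have "\<forall>\<^sub>F y in at_left x. a < y \<and> y < x"
        using x(1) unfolding eventually_at_left_field by (intro exI[of _ a]) auto
      ultimately have "\<forall>\<^sub>F y in at_left x. B x < F y \<and> a < y \<and> y < x" by eventually_elim simp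
      then obtain y where "B x < F y" "a < y" "y < x"
        using eventually_happens'[OF trivial_limit_at_left_real] by blast
      moreover have "B y \<le> B x" using \<open>y < x\<close> \<open>0 < \<epsilon>\<close> by (simp add: B_def)
      ultimately show False using below[of y] by simp
    qed
  qed
  moreover have "\<epsilon> * (b - a + 1) = E" using \<open>a \<le> b\<close> by (simp add: \<epsilon>_def)
  ultimately show "F b \<le> F a + E" by (simp add: B_def algebra_simps)
qed

lemma nonpos_by_right_dini:
  fixes F :: "real \<Rightarrow> real"
  assumes "a \<le> b" "F a \<le> 0"
    and lsc: "\<And>x c. a < x \<Longrightarrow> x \<le> b \<Longrightarrow> c < F x \<Longrightarrow> \<forall>\<^sub>F y in at_left x. c < F y"
    and usc: "\<And>x c. a \<le> x \<Longrightarrow> x < b \<Longrightarrow> F x < c \<Longrightarrow> \<forall>\<^sub>F y in at_right x. F y < c"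
    and dini: "\<And>x e. a < x \<Longrightarrow> x < b \<Longrightarrow> 0 < F x \<Longrightarrow> 0 < e \<Longrightarrow>
                 \<forall>\<^sub>F y in at_right x. F y \<le> F x + e * (y - x)"
  shows "F b \<le> 0"
proof (rule ccontr)
  assume "\<not> F b \<le> 0"
  define T where "T = {x. a \<le> x \<and> x \<le> b \<and> F x \<le> 0}"
  define c where "c = Sup T"
  have "a \<in> T" using assms(1,2) by (simp add: T_def)
  have bdd: "bdd_above T" by (auto simp: T_def bdd_above_def)
  have le_c: "x \<le> c" if "x \<in> T" for x using cSup_upper[OF that bdd] by (simp add: c_def)
  have "a \<le> c" "c \<le> b" using le_c[OF \<open>a \<in> T\<close>] \<open>a \<in> T\<close> by (auto simp: c_def T_def intro!: cSup_least)
  have "F c \<le> 0"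
  proof (rule ccontr)
    assume "\<not> F c \<le> 0"
    then have "a < c" using \<open>a \<le> c\<close> assms(2) by (cases "a = c") auto
    from lsc[OF this \<open>c \<le> b\<close>, of 0] \<open>\<not> F c \<le> 0\<close> obtain d where "d < c"
      and pos: "\<And>y. d < y \<Longrightarrow> y < c \<Longrightarrow> 0 < F y"
      by (auto simp: eventually_at_left_field)
    obtain y where "y \<in> T" "d < y" using less_cSup_iff[OF _ bdd, of d] \<open>a \<in> T\<close> \<open>d < c\<close> c_def by auto
    have "y < c" using le_c[OF \<open>y \<in> T\<close>] \<open>y \<in> T\<close> \<open>\<not> F c \<le> 0\<close> by (cases "y = c") (auto simp: T_def)
    with pos[OF \<open>d < y\<close>] \<open>y \<in> T\<close> show False by (simp add: T_def)
  qed
  with \<open>\<not> F b \<le> 0\<close> \<open>c \<le> b\<close> have "c < b" by (cases "c = b") auto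
  have pos: "0 < F x" if "c < x" "x \<le> b" for x
    using le_c[of x] that \<open>a \<le> c\<close> by (force simp: T_def)
  have "F b \<le> F c"
  proof (rule nonincreasing_by_right_dini[where F = F and a = c and b = b])
    show "\<And>x c'. c < x \<Longrightarrow> x \<le> b \<Longrightarrow> c' < F x \<Longrightarrow> \<forall>\<^sub>F y in at_left x. c' < F y"
      using lsc \<open>a \<le> c\<close> by auto
    show "\<And>c'. F c < c' \<Longrightarrow> \<forall>\<^sub>F y in at_right c. F y < c'"
      using usc \<open>a \<le> c\<close> \<open>c < b\<close> by auto
    show "\<And>x e. c < x \<Longrightarrow> x < b \<Longrightarrow> 0 < e \<Longrightarrow> \<forall>\<^sub>F y in at_right x. F y \<le> F x + e * (y - x)"
      using dini pos \<open>a \<le> c\<close> by auto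
  qed (use \<open>c \<le> b\<close> in simp)
  with \<open>F c \<le> 0\<close> \<open>\<not> F b \<le> 0\<close> show False by simp
qed

lemma continuous_on_Icc_tendsto_at_left:
  fixes F :: "real \<Rightarrow> 'a::topological_space"
  assumes "continuous_on {a..b} F" "a < x" "x \<le> b"
  shows "(F \<longlongrightarrow> F x) (at_left x)"
  using continuous_on_Icc_at_leftD[OF continuous_on_subset[OF assms(1)] \<open>a < x\<close>] assms(3) by auto

lemma continuous_on_Icc_tendsto_at_right:
  fixes F :: "real \<Rightarrow> 'a::topological_space"
  assumes "continuous_on {a..b} F" "a \<le> x" "x < b"
  shows "(F \<longlongrightarrow> F x) (at_right x)"
  using continuous_on_Icc_at_rightD[OF continuous_on_subset[OF assms(1)] \<open>x < b\<close>] assms(2) by auto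

lemma nonincreasing_by_right_dini_continuous:
  fixes F :: "real \<Rightarrow> real"
  assumes "a \<le> b" and cont: "continuous_on {a..b} F"
    and "\<And>x e. a < x \<Longrightarrow> x < b \<Longrightarrow> 0 < e \<Longrightarrow> \<forall>\<^sub>F y in at_right x. F y \<le> F x + e * (y - x)"
  shows "F b \<le> F a"
proof (cases "a = b")
  case False
  show ?thesis
  proof (rule nonincreasing_by_right_dini[where F = F and a = a and b = b])
    show "\<forall>\<^sub>F y in at_left x. c < F y" if "a < x" "x \<le> b" "c < F x" for x c
      using continuous_on_Icc_tendsto_at_left[OF cont that(1,2)] that(3) by (rule order_tendstoD)
    show "\<forall>\<^sub>F y in at_right a. F y < c" if "F a < c" for c
      using continuous_on_Icc_tendsto_at_right[OF cont order_refl] False \<open>a \<le> b\<close> that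
      by (intro order_tendstoD) auto
  qed (use assms in auto)
qed simp

lemma nonpos_by_right_dini_continuous:
  fixes F :: "real \<Rightarrow> real"
  assumes "a \<le> b" "F a \<le> 0" and cont: "continuous_on {a..b} F"
    and "\<And>x e. a < x \<Longrightarrow> x < b \<Longrightarrow> 0 < F x \<Longrightarrow> 0 < e \<Longrightarrow>
           \<forall>\<^sub>F y in at_right x. F y \<le> F x + e * (y - x)"
  shows "F b \<le> 0"
proof (rule nonpos_by_right_dini[where F = F and a = a and b = b])
  show "\<forall>\<^sub>F y in at_left x. c < F y" if "a < x" "x \<le> b" "c < F x" for x c
    using continuous_on_Icc_tendsto_at_left[OF cont that(1,2)] that(3) by (rule order_tendstoD)
  show "\<forall>\<^sub>F y in at_right x. F y < c" if "a \<le> x" "x < b" "F x < c" for x c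
    using continuous_on_Icc_tendsto_at_right[OF cont that(1,2)] that(3) by (rule order_tendstoD)
qed (use assms in auto)

lemma constant_by_right_derivative_zero:
  fixes F :: "real \<Rightarrow> real"
  assumes "a \<le> b" "continuous_on {a..b} F"
    and "\<And>x. a < x \<Longrightarrow> x < b \<Longrightarrow> (F has_real_derivative 0) (at_right x)"
  shows "F b = F a"
proof -
  have "F b \<le> F a"
  proof (rule nonincreasing_by_right_dini_continuous[OF assms(1,2)])
    show "\<forall>\<^sub>F y in at_right x. F y \<le> F x + e * (y - x)" if "a < x" "x < b" "0 < e" for x e
      using assms(3)[OF that(1,2)] that(3) by (rule right_dini_le_of_derivative)
  qed
  moreover have "- F b \<le> - F a"
  proof (rule nonincreasing_by_right_dini_continuous[where F = "\<lambda>x. - F x", OF assms(1)])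
    show "continuous_on {a..b} (\<lambda>x. - F x)" using assms(2) by (rule continuous_on_minus)
    show "\<forall>\<^sub>F y in at_right x. - F y \<le> - F x + e * (y - x)" if "a < x" "x < b" "0 < e" for x e
      using DERIV_minus[OF assms(3)[OF that(1,2)]] that(3) by (intro right_dini_le_of_derivative) auto
  qed
  ultimately show ?thesis by simp
qed

lemma eventually_gt_diff_tendsto:
  fixes f g :: "'a \<Rightarrow> real"
  assumes "\<And>c. c < f x \<Longrightarrow> \<forall>\<^sub>F y in F. c < f y" "(g \<longlongrightarrow> g x) F" "c < f x - g x"
  shows "\<forall>\<^sub>F y in F. c < f y - g y"
proof -
  define d where "d = (f x - g x - c) / 2"
  have "0 < d" "f x - g x - c = 2 * d" using assms(3) by (simp_all add: d_def)
  have "\<forall>\<^sub>F y in F. f x - d < f y" using assms(1) \<open>0 < d\<close> by simp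
  moreover have "\<forall>\<^sub>F y in F. g y < g x + d" using order_tendstoD(2)[OF assms(2)] \<open>0 < d\<close> by simp
  ultimately show ?thesis by eventually_elim (use \<open>_ = 2 * d\<close> in linarith)
qed

lemma eventually_diff_less_tendsto:
  fixes f g :: "'a \<Rightarrow> real"
  assumes "\<And>c. f x < c \<Longrightarrow> \<forall>\<^sub>F y in F. f y < c" "(g \<longlongrightarrow> g x) F" "f x - g x < c"
  shows "\<forall>\<^sub>F y in F. f y - g y < c"
proof -
  define d where "d = (c - f x + g x) / 2"
  have "0 < d" "c - f x + g x = 2 * d" using assms(3) by (simp_all add: d_def)
  have "\<forall>\<^sub>F y in F. f y < f x + d" using assms(1) \<open>0 < d\<close> by simp
  moreover have "\<forall>\<^sub>F y in F. g x - d < g y" using order_tendstoD(1)[OF assms(2)] \<open>0 < d\<close> by simp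
  ultimately show ?thesis by eventually_elim (use \<open>_ = 2 * d\<close> in linarith)
qed

lemma powr_half_power2:
  assumes "0 \<le> (a::real)"
  shows "(a\<^sup>2) powr (q / 2) = a powr q"
proof (cases "a = 0")
  case False
  with assms have "a\<^sup>2 = a powr 2" by (simp add: powr_numeral)
  then show ?thesis by (simp add: powr_powr)
qed simp

section \<open>Comparison with the Bernoulli equation\<close>

lemma a_fun_zero: "a_fun p c 0 = 1"
  by (simp add: a_fun_def)

lemma a_fun_base_pos: "2 \<le> (p::real) \<Longrightarrow> 0 \<le> c \<Longrightarrow> 0 \<le> s \<Longrightarrow> 0 < 1 + (p - 2) * c * s"
  by (simp add: add_pos_nonneg)

lemma a_fun_pos: "2 \<le> p \<Longrightarrow> 0 \<le> c \<Longrightarrow> 0 \<le> s \<Longrightarrow> 0 < a_fun p c s"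
  using a_fun_base_pos[of p c s] by (simp add: a_fun_def)

lemma a_fun_powr:
  assumes "2 < p" "0 \<le> c" "0 \<le> s"
  shows "a_fun p c s powr (p - 2) = 1 / (1 + (p - 2) * c * s)"
proof -
  have "a_fun p c s powr (p - 2) = (1 + (p - 2) * c * s) powr (- 1 / (p - 2) * (p - 2))"
    using assms by (simp add: a_fun_def powr_powr)
  also have "\<dots> = 1 / (1 + (p - 2) * c * s)"
    using assms by (simp add: powr_minus_divide)
  finally show ?thesis .
qed

lemma a_fun_has_derivative:
  assumes "2 \<le> p" "0 \<le> c" "0 \<le> s"
  shows "(a_fun p c has_real_derivative - c * a_fun p c s powr (p - 1)) (at s)"
proof (cases "p = 2")
  case True
  have "((\<lambda>s. exp (- c * s)) has_real_derivative exp (- c * s) * - c) (at s)"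
    by (auto intro!: derivative_eq_intros)
  then show ?thesis using True by (simp add: a_fun_def[abs_def] powr_def mult.commute)
next
  case False
  with assms have "2 < p" by simp
  define B where "B s = 1 + (p - 2) * c * s" for s
  have "0 < B s" using a_fun_base_pos[OF assms] by (simp add: B_def)
  have "(B has_real_derivative (p - 2) * c) (at s)"
    unfolding B_def[abs_def] by (auto intro!: derivative_eq_intros)
  from DERIV_fun_powr[OF this \<open>0 < B s\<close>, of "- 1 / (p - 2)"]
  have "((\<lambda>s. B s powr (- 1 / (p - 2))) has_real_derivative
      - 1 / (p - 2) * B s powr (- 1 / (p - 2) - 1) * ((p - 2) * c)) (at s)"
    by simp
  moreover have "B s powr (- 1 / (p - 2) - 1) = (B s powr (- 1 / (p - 2))) powr (p - 1)"
  proof -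
    have "- 1 / (p - 2) - 1 = - 1 / (p - 2) * (p - 1)" using \<open>2 < p\<close> by (simp add: field_simps)
    then show ?thesis by (simp only: powr_powr)
  qed
  ultimately show ?thesis
    using False \<open>2 < p\<close> by (simp add: a_fun_def[abs_def] B_def mult.commute)
qed

text \<open>The solution of \<open>y' = - c y powr (p - 1)\<close>, \<open>y 0 = y\<^sub>0\<close>.\<close>
definition bernoulli_solution :: "real \<Rightarrow> real \<Rightarrow> real \<Rightarrow> real \<Rightarrow> real" where
  "bernoulli_solution p c y\<^sub>0 s = y\<^sub>0 * a_fun p (c * y\<^sub>0 powr (p - 2)) s"

lemma bernoulli_solution_nonneg:
  "2 \<le> p \<Longrightarrow> 0 \<le> c \<Longrightarrow> 0 \<le> y\<^sub>0 \<Longrightarrow> 0 \<le> s \<Longrightarrow> 0 \<le> bernoulli_solution p c y\<^sub>0 s"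
  using a_fun_pos[of p "c * y\<^sub>0 powr (p - 2)" s] by (simp add: bernoulli_solution_def)

lemma bernoulli_solution_sq_has_derivative:
  assumes "2 \<le> p" "0 \<le> c" "0 \<le> y\<^sub>0" "s\<^sub>0 \<le> x"
  shows "((\<lambda>s. (bernoulli_solution p c y\<^sub>0 (s - s\<^sub>0))\<^sup>2) has_real_derivative
           - 2 * c * bernoulli_solution p c y\<^sub>0 (x - s\<^sub>0) powr p) (at x)"
proof -
  define C where "C = c * y\<^sub>0 powr (p - 2)"
  define a where "a = a_fun p C (x - s\<^sub>0)"
  have "0 \<le> C" using assms by (simp add: C_def)
  have "0 < a" using a_fun_pos[OF assms(1) \<open>0 \<le> C\<close>] assms(4) by (simp add: a_def)
  have "((\<lambda>s. s - s\<^sub>0) has_real_derivative 1) (at x)"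
    by (auto intro!: derivative_eq_intros)
  from DERIV_chain2[OF a_fun_has_derivative[OF assms(1) \<open>0 \<le> C\<close>, of "x - s\<^sub>0"] this]
  have "((\<lambda>s. a_fun p C (s - s\<^sub>0)) has_real_derivative - C * a powr (p - 1)) (at x)"
    using assms(4) by (simp add: a_def)
  from DERIV_power[OF DERIV_cmult[OF this, of y\<^sub>0], of 2]
  have D: "((\<lambda>s. (y\<^sub>0 * a_fun p C (s - s\<^sub>0))\<^sup>2) has_real_derivative
      2 * (y\<^sub>0 * a) * (y\<^sub>0 * (- C * a powr (p - 1)))) (at x)"
    by (simp add: a_def algebra_simps)
  have E: "2 * (y\<^sub>0 * a) * (y\<^sub>0 * (- C * a powr (p - 1))) = - 2 * c * (y\<^sub>0 * a) powr p"
  proof (cases "y\<^sub>0 = 0")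
    case False
    with assms(3) have "0 < y\<^sub>0" by simp
    have "2 * (y\<^sub>0 * a) * (y\<^sub>0 * (- C * a powr (p - 1)))
        = - 2 * c * ((y\<^sub>0 * y\<^sub>0 * y\<^sub>0 powr (p - 2)) * (a * a powr (p - 1)))"
      by (simp add: C_def algebra_simps)
    also have "y\<^sub>0 * y\<^sub>0 * y\<^sub>0 powr (p - 2) = y\<^sub>0 powr p"
      using \<open>0 < y\<^sub>0\<close> by (simp add: powr_diff power2_eq_square flip: powr_realpow)
    also have "a * a powr (p - 1) = a powr p"
      using \<open>0 < a\<close> by (simp add: powr_diff)
    finally show ?thesis
      using \<open>0 < y\<^sub>0\<close> \<open>0 < a\<close> by (simp add: powr_mult)
  qed simp
  show ?thesis
    using D unfolding E bernoulli_solution_def C_def[symmetric] a_def[symmetric] .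
qed

lemma bernoulli_solution_sq_continuous_on:
  "2 \<le> p \<Longrightarrow> 0 \<le> c \<Longrightarrow> 0 \<le> y\<^sub>0 \<Longrightarrow>
    continuous_on {s\<^sub>0..t} (\<lambda>s. (bernoulli_solution p c y\<^sub>0 (s - s\<^sub>0))\<^sup>2)"
  by (rule DERIV_continuous_on[OF has_field_derivative_at_within[OF bernoulli_solution_sq_has_derivative]])
     auto

lemma bernoulli_solution_start: "bernoulli_solution p c y\<^sub>0 0 = y\<^sub>0"
  by (simp add: bernoulli_solution_def a_fun_zero)

lemma bernoulli_comparison_upper:
  fixes n D :: "real \<Rightarrow> real"
  assumes "2 \<le> p" "0 \<le> c" "s\<^sub>0 \<le> t" "continuous_on {s\<^sub>0..t} n"
    and nonneg: "\<And>s. s\<^sub>0 \<le> s \<Longrightarrow> s \<le> t \<Longrightarrow> 0 \<le> n s"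
    and deriv: "\<And>s. s\<^sub>0 < s \<Longrightarrow> s < t \<Longrightarrow> ((\<lambda>r. (n r)\<^sup>2) has_real_derivative D s) (at_right s)"
    and bound: "\<And>s. s\<^sub>0 < s \<Longrightarrow> s < t \<Longrightarrow> D s \<le> - 2 * c * n s powr p"
  shows "n t \<le> bernoulli_solution p c (n s\<^sub>0) (t - s\<^sub>0)"
proof -
  define Y where "Y s = bernoulli_solution p c (n s\<^sub>0) (s - s\<^sub>0)" for s
  have "0 \<le> n s\<^sub>0" using nonneg assms(3) by simp
  have "(n t)\<^sup>2 - (Y t)\<^sup>2 \<le> 0"
  proof (rule nonpos_by_right_dini_continuous[where F = "\<lambda>s. (n s)\<^sup>2 - (Y s)\<^sup>2", OF assms(3)])
    show "(n s\<^sub>0)\<^sup>2 - (Y s\<^sub>0)\<^sup>2 \<le> 0" by (simp add: Y_def bernoulli_solution_start)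
    show "continuous_on {s\<^sub>0..t} (\<lambda>s. (n s)\<^sup>2 - (Y s)\<^sup>2)"
      unfolding Y_def using assms \<open>0 \<le> n s\<^sub>0\<close>
      by (intro continuous_intros bernoulli_solution_sq_continuous_on)
  next
    fix x e :: real assume x: "s\<^sub>0 < x" "x < t" "0 < (n x)\<^sup>2 - (Y x)\<^sup>2" "0 < e"
    have "0 \<le> Y x" unfolding Y_def using assms \<open>0 \<le> n s\<^sub>0\<close> x by (intro bernoulli_solution_nonneg) auto
    with x nonneg[of x] have "Y x \<le> n x" by (smt (verit) power_mono)
    then have "Y x powr p \<le> n x powr p" using \<open>0 \<le> Y x\<close> assms(1) by (intro powr_mono2) auto
    then have "c * Y x powr p \<le> c * n x powr p" using assms(2) by (rule mult_left_mono)
    then have "D x - - 2 * c * Y x powr p < e" using bound[OF x(1,2)] x(4) by linarith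
    moreover have "((\<lambda>s. (n s)\<^sup>2 - (Y s)\<^sup>2) has_real_derivative D x - - 2 * c * Y x powr p) (at_right x)"
      unfolding Y_def using assms \<open>0 \<le> n s\<^sub>0\<close> x
      by (intro DERIV_diff deriv has_field_derivative_at_within[OF bernoulli_solution_sq_has_derivative]) auto
    ultimately show "\<forall>\<^sub>F y in at_right x. (n y)\<^sup>2 - (Y y)\<^sup>2 \<le> (n x)\<^sup>2 - (Y x)\<^sup>2 + e * (y - x)"
      by (intro right_dini_le_of_derivative)
  qed
  moreover have "0 \<le> Y t" unfolding Y_def using assms \<open>0 \<le> n s\<^sub>0\<close> by (intro bernoulli_solution_nonneg) auto
  ultimately show ?thesis using nonneg[of t] assms(3) by (simp add: Y_def power_mono_iff)
qed

lemma bernoulli_comparison_lower: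
  fixes n D :: "real \<Rightarrow> real"
  assumes "2 \<le> p" "0 \<le> c" "s\<^sub>0 \<le> t" "continuous_on {s\<^sub>0..t} n"
    and nonneg: "\<And>s. s\<^sub>0 \<le> s \<Longrightarrow> s \<le> t \<Longrightarrow> 0 \<le> n s"
    and deriv: "\<And>s. s\<^sub>0 < s \<Longrightarrow> s < t \<Longrightarrow> ((\<lambda>r. (n r)\<^sup>2) has_real_derivative D s) (at_right s)"
    and bound: "\<And>s. s\<^sub>0 < s \<Longrightarrow> s < t \<Longrightarrow> - 2 * c * n s powr p \<le> D s"
  shows "bernoulli_solution p c (n s\<^sub>0) (t - s\<^sub>0) \<le> n t"
proof -
  define Y where "Y s = bernoulli_solution p c (n s\<^sub>0) (s - s\<^sub>0)" for s
  have "0 \<le> n s\<^sub>0" using nonneg assms(3) by simp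
  have "(Y t)\<^sup>2 - (n t)\<^sup>2 \<le> 0"
  proof (rule nonpos_by_right_dini_continuous[where F = "\<lambda>s. (Y s)\<^sup>2 - (n s)\<^sup>2", OF assms(3)])
    show "(Y s\<^sub>0)\<^sup>2 - (n s\<^sub>0)\<^sup>2 \<le> 0" by (simp add: Y_def bernoulli_solution_start)
    show "continuous_on {s\<^sub>0..t} (\<lambda>s. (Y s)\<^sup>2 - (n s)\<^sup>2)"
      unfolding Y_def using assms \<open>0 \<le> n s\<^sub>0\<close>
      by (intro continuous_intros bernoulli_solution_sq_continuous_on)
  next
    fix x e :: real assume x: "s\<^sub>0 < x" "x < t" "0 < (Y x)\<^sup>2 - (n x)\<^sup>2" "0 < e"
    have "0 \<le> Y x" unfolding Y_def using assms \<open>0 \<le> n s\<^sub>0\<close> x by (intro bernoulli_solution_nonneg) auto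
    with x nonneg[of x] have "n x \<le> Y x" by (smt (verit) power_mono)
    then have "n x powr p \<le> Y x powr p" using nonneg[of x] x assms(1) by (intro powr_mono2) auto
    then have "c * n x powr p \<le> c * Y x powr p" using assms(2) by (rule mult_left_mono)
    then have "- 2 * c * Y x powr p - D x < e" using bound[OF x(1,2)] x(4) by linarith
    moreover have "((\<lambda>s. (Y s)\<^sup>2 - (n s)\<^sup>2) has_real_derivative - 2 * c * Y x powr p - D x) (at_right x)"
      unfolding Y_def using assms \<open>0 \<le> n s\<^sub>0\<close> x
      by (intro DERIV_diff deriv has_field_derivative_at_within[OF bernoulli_solution_sq_has_derivative]) auto
    ultimately show "\<forall>\<^sub>F y in at_right x. (Y y)\<^sup>2 - (n y)\<^sup>2 \<le> (Y x)\<^sup>2 - (n x)\<^sup>2 + e * (y - x)"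
      by (intro right_dini_le_of_derivative)
  qed
  then show ?thesis using nonneg[of t] assms(3) by (simp add: Y_def abs_le_square_iff[symmetric])
qed

lemma ratio_le_of_rate_bounds:
  fixes l R X D d t k :: real
  assumes "0 < l" "l \<le> R" "0 < X" "l * X \<le> D" "0 \<le> d" "d \<le> t" "0 < k"
  shows "l * X / R \<le> X * (1 + k * D * t) / (1 + k * R * X * (t - d))"
proof -
  have "0 < R" "0 \<le> D" using assms(1-4) by (auto intro: order.trans[rotated])
  have "l * (1 + k * R * X * (t - d)) = l + k * R * (l * X) * (t - d)"
    by (simp add: algebra_simps)
  also have "\<dots> \<le> R + k * R * D * t"
    using assms \<open>0 < R\<close> \<open>0 \<le> D\<close> by (intro add_mono mult_mono mult_left_mono) auto
  also have "\<dots> = R * (1 + k * D * t)" by (simp add: algebra_simps)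
  finally have "X * (l * (1 + k * R * X * (t - d))) \<le> X * (R * (1 + k * D * t))"
    using \<open>0 < X\<close> by (intro mult_left_mono) auto
  then have "l * X * (1 + k * R * X * (t - d)) \<le> X * (1 + k * D * t) * R"
    by (simp add: algebra_simps)
  moreover have "0 < 1 + k * R * X * (t - d)"
    using \<open>0 < R\<close> assms(3,6,7) by (simp add: add_pos_nonneg)
  ultimately show ?thesis using \<open>0 < R\<close> by (simp add: divide_le_eq le_divide_eq)
qed

section \<open>Approximate minimal-norm elements\<close>

lemma parallelogram_law_midpoint:
  fixes x y :: "'a::real_inner"
  shows "(norm (x - y))\<^sup>2 = 2 * (norm x)\<^sup>2 + 2 * (norm y)\<^sup>2 - 4 * (norm ((1/2) *\<^sub>R (x + y)))\<^sup>2"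
  by (simp add: power2_norm_eq_inner algebra_simps inner_commute)

lemma Cauchy_of_midpoint_norm_bounds:
  fixes X :: "nat \<Rightarrow> 'a::real_inner"
  assumes "incseq r" "r \<longlonglongrightarrow> R" "\<And>n. 0 \<le> r n" "decseq \<epsilon>" "\<epsilon> \<longlonglongrightarrow> 0"
    and mid: "\<And>m n. m \<le> n \<Longrightarrow> r m \<le> norm ((1/2) *\<^sub>R (X m + X n))"
    and bound: "\<And>n. norm (X n) \<le> r n + \<epsilon> n"
  shows "Cauchy X"
proof (rule metric_CauchyI)
  fix e :: real assume "0 < e"
  have bound': "norm (X n) \<le> R + \<epsilon> m" if "m \<le> n" for m n
    using bound[of n] incseq_le[OF assms(1,2), of n] decseqD[OF assms(4) that] by linarith
  define B where "B m = 4 * ((R + \<epsilon> m)\<^sup>2 - (r m)\<^sup>2)" for m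
  have "B \<longlonglongrightarrow> 4 * ((R + 0)\<^sup>2 - R\<^sup>2)"
    unfolding B_def by (intro tendsto_intros assms(2,5))
  then obtain M where M: "\<And>m. M \<le> m \<Longrightarrow> B m < e\<^sup>2"
    using order_tendstoD(2)[of B 0 sequentially "e\<^sup>2"] \<open>0 < e\<close> by (auto simp: eventually_sequentially)
  have dist_le: "(dist (X m) (X n))\<^sup>2 \<le> B m" if "m \<le> n" for m n
  proof -
    have "(dist (X m) (X n))\<^sup>2 = 2 * (norm (X m))\<^sup>2 + 2 * (norm (X n))\<^sup>2 - 4 * (norm ((1/2) *\<^sub>R (X m + X n)))\<^sup>2"
      by (simp add: dist_norm parallelogram_law_midpoint)
    also have "\<dots> \<le> 2 * (R + \<epsilon> m)\<^sup>2 + 2 * (R + \<epsilon> m)\<^sup>2 - 4 * (r m)\<^sup>2"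
      using bound'[OF order_refl, of m] bound'[OF that] mid[OF that] assms(3)[of m]
      by (intro diff_mono add_mono mult_left_mono power_mono) auto
    finally show ?thesis by (simp add: B_def algebra_simps)
  qed
  show "\<exists>M. \<forall>m\<ge>M. \<forall>n\<ge>M. dist (X m) (X n) < e"
  proof (intro exI allI impI)
    fix m n assume "M \<le> m" "M \<le> n"
    have "(dist (X m) (X n))\<^sup>2 < e\<^sup>2"
      using dist_le[of m n] dist_le[of n m] M[OF \<open>M \<le> m\<close>] M[OF \<open>M \<le> n\<close>]
      by (cases "m \<le> n") (auto simp: dist_commute)
    then show "dist (X m) (X n) < e" using \<open>0 < e\<close> by (simp add: power_less_imp_less_base)
  qed
qed

text \<open>Near-minimisers in the convex sets \<open>K e\<close> form a Cauchy sequence by the parallelogram law.\<close>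
lemma short_elem_of_approx:
  fixes K :: "real \<Rightarrow> 'a::{real_inner,complete_space} set"
  assumes mono: "\<And>e e'. e \<le> e' \<Longrightarrow> K e \<subseteq> K e'"
    and midpoint: "\<And>e x y. x \<in> K e \<Longrightarrow> y \<in> K e \<Longrightarrow> (1/2) *\<^sub>R (x + y) \<in> K e"
    and limit: "\<And>X m. X \<longlonglongrightarrow> m \<Longrightarrow> (\<And>e. 0 < e \<Longrightarrow> \<forall>\<^sub>F n in sequentially. X n \<in> K e) \<Longrightarrow> m \<in> K 0"
    and short: "\<And>e. 0 < e \<Longrightarrow> \<exists>x\<in>K e. norm x < c"
  shows "\<exists>m\<in>K 0. norm m \<le> c"
proof -
  define \<epsilon> where "\<epsilon> n = 1 / real (Suc n)" for n
  have \<epsilon>_pos: "0 < \<epsilon> n" for n by (simp add: \<epsilon>_def)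
  have "decseq \<epsilon>" unfolding \<epsilon>_def by (intro decseq_SucI) (simp add: frac_le)
  have \<epsilon>_lim: "\<epsilon> \<longlonglongrightarrow> 0" unfolding \<epsilon>_def by (rule LIMSEQ_Suc[OF lim_inverse_n'])
  define r where "r n = Inf (norm ` K (\<epsilon> n))" for n
  have ne: "norm ` K (\<epsilon> n) \<noteq> {}" for n using short[OF \<epsilon>_pos[of n]] by auto
  have bdd: "bdd_below (norm ` K (\<epsilon> n))" for n by (auto intro: bdd_belowI[of _ 0])
  have r_le: "r n \<le> norm x" if "x \<in> K (\<epsilon> n)" for n x
    unfolding r_def using that bdd by (auto intro: cInf_lower)
  have r_nonneg: "0 \<le> r n" for n unfolding r_def using ne by (auto intro: cInf_greatest)
  have "incseq r"
    unfolding incseq_def r_def using mono[OF decseqD[OF \<open>decseq \<epsilon>\<close>]] ne bdd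
    by (auto intro!: cInf_superset_mono)
  have r_le_c: "r n \<le> c" for n using short[OF \<epsilon>_pos[of n]] r_le by force
  then have "bdd_above (range r)" by (auto simp: bdd_above_def)
  have "\<exists>x\<in>K (\<epsilon> n). norm x < r n + \<epsilon> n" for n
    using cInf_lessD[OF ne[of n], of "r n + \<epsilon> n"] \<epsilon>_pos[of n] by (auto simp: r_def)
  then obtain X where X: "\<And>n. X n \<in> K (\<epsilon> n)" "\<And>n. norm (X n) < r n + \<epsilon> n" by metis
  have "Cauchy X"
    using \<open>incseq r\<close> LIMSEQ_incseq_SUP[OF \<open>bdd_above (range r)\<close> \<open>incseq r\<close>] r_nonneg \<open>decseq \<epsilon>\<close> \<epsilon>_lim
  proof (rule Cauchy_of_midpoint_norm_bounds)
    show "r m \<le> norm ((1/2) *\<^sub>R (X m + X n))" if "m \<le> n" for m n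
      using mono[OF decseqD[OF \<open>decseq \<epsilon>\<close> that]] X(1) midpoint by (blast intro: r_le)
  qed (use X(2) less_imp_le in blast)
  then obtain m where m: "X \<longlonglongrightarrow> m" using Cauchy_convergent convergent_def by blast
  have "m \<in> K 0"
  proof (rule limit[OF m])
    fix e :: real assume "0 < e"
    then have "\<forall>\<^sub>F n in sequentially. \<epsilon> n < e" using order_tendstoD(2)[OF \<epsilon>_lim] by auto
    then show "\<forall>\<^sub>F n in sequentially. X n \<in> K e"
      by eventually_elim (use X(1) mono in \<open>blast dest: less_imp_le\<close>)
  qed
  moreover have "norm m \<le> c"
  proof (rule tendsto_le[OF sequentially_bot _ tendsto_norm[OF m]])
    show "(\<lambda>n. c + \<epsilon> n) \<longlonglongrightarrow> c" using tendsto_add[OF tendsto_const \<epsilon>_lim, of c] by simp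
    show "\<forall>\<^sub>F n in sequentially. norm (X n) \<le> c + \<epsilon> n"
      using X(2) r_le_c by (intro always_eventually allI) (metis add_mono less_imp_le order.refl order.trans)
  qed
  ultimately show ?thesis by blast
qed

lemma min_norm_elem_approx_lower_bound:
  fixes K :: "real \<Rightarrow> 'a::{real_inner,complete_space} set"
  assumes mono: "\<And>e e'. e \<le> e' \<Longrightarrow> K e \<subseteq> K e'"
    and midpoint: "\<And>e x y. x \<in> K e \<Longrightarrow> y \<in> K e \<Longrightarrow> (1/2) *\<^sub>R (x + y) \<in> K e"
    and limit: "\<And>X m. X \<longlonglongrightarrow> m \<Longrightarrow> (\<And>e. 0 < e \<Longrightarrow> \<forall>\<^sub>F n in sequentially. X n \<in> K e) \<Longrightarrow> m \<in> K 0"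
    and min: "min_norm_elem z (K 0)"
    and "0 < k"
  shows "\<exists>e>0. \<forall>x\<in>K e. norm z - k \<le> norm x"
proof (rule ccontr)
  assume "\<not> ?thesis"
  then have "\<exists>x\<in>K e. norm x < norm z - k" if "0 < e" for e
    using that by (auto simp: not_le)
  with mono midpoint limit obtain m where "m \<in> K 0" "norm m \<le> norm z - k"
    using short_elem_of_approx[of K "norm z - k"] by blast
  with min \<open>0 < k\<close> show False by (force simp: min_norm_elem_def)
qed

lemma dist_sq_le_of_midpoint_norm:
  fixes x z :: "'a::real_inner"
  assumes "norm x \<le> norm z" "norm z - k \<le> norm ((1/2) *\<^sub>R (x + z))" "0 \<le> k"
  shows "(dist x z)\<^sup>2 \<le> 8 * k * norm z + 4 * k\<^sup>2"
proof (cases "norm z < k")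
  case True
  have "dist x z \<le> 2 * k"
    using assms(1) True norm_triangle_ineq4[of x z] by (simp add: dist_norm)
  then have "(dist x z)\<^sup>2 \<le> (2 * k)\<^sup>2" by (rule power_mono) simp
  moreover have "0 \<le> 8 * k * norm z" using assms(3) by simp
  ultimately show ?thesis by (simp add: power_mult_distrib)
next
  case False
  then have "(norm z - k)\<^sup>2 \<le> (norm ((1/2) *\<^sub>R (x + z)))\<^sup>2" using assms(2) by (intro power_mono) auto
  then have "(dist x z)\<^sup>2 \<le> 2 * (norm x)\<^sup>2 + 2 * (norm z)\<^sup>2 - 4 * (norm z - k)\<^sup>2"
    by (simp add: dist_norm parallelogram_law_midpoint)
  also have "\<dots> \<le> 4 * (norm z)\<^sup>2 - 4 * (norm z - k)\<^sup>2" using assms(1) by (simp add: power_mono)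
  also have "\<dots> \<le> 8 * k * norm z + 4 * k\<^sup>2" by (simp add: power2_eq_square algebra_simps)
  finally show ?thesis .
qed

lemma tendsto_min_norm_elem_of_approx:
  fixes K :: "real \<Rightarrow> 'a::{real_inner,complete_space} set"
  assumes mono: "\<And>e e'. e \<le> e' \<Longrightarrow> K e \<subseteq> K e'"
    and midpoint: "\<And>e x y. x \<in> K e \<Longrightarrow> y \<in> K e \<Longrightarrow> (1/2) *\<^sub>R (x + y) \<in> K e"
    and limit: "\<And>X m. X \<longlonglongrightarrow> m \<Longrightarrow> (\<And>e. 0 < e \<Longrightarrow> \<forall>\<^sub>F n in sequentially. X n \<in> K e) \<Longrightarrow> m \<in> K 0"
    and min: "min_norm_elem z (K 0)"
    and "(\<epsilon> \<longlongrightarrow> 0) F" "\<forall>\<^sub>F s in F. \<eta> s \<in> K (\<epsilon> s)" "\<forall>\<^sub>F s in F. norm (\<eta> s) \<le> norm z"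
  shows "(\<eta> \<longlongrightarrow> z) F"
proof (rule tendstoI)
  fix r :: real assume "0 < r"
  define k where "k = min (r / 4) (r\<^sup>2 / (16 * (norm z + 1)))"
  have "0 < k" using \<open>0 < r\<close> by (simp add: k_def add_nonneg_pos)
  have "8 * k * norm z \<le> r\<^sup>2 / 2"
  proof -
    have "8 * k * norm z \<le> 8 * (r\<^sup>2 / (16 * (norm z + 1))) * norm z"
      by (intro mult_right_mono mult_left_mono) (auto simp: k_def)
    also have "\<dots> = r\<^sup>2 / 2 * (norm z / (norm z + 1))"
      using add_nonneg_pos[OF norm_ge_zero zero_less_one, of z] by (simp add: field_simps)
    also have "\<dots> \<le> r\<^sup>2 / 2 * 1"
      using add_nonneg_pos[OF norm_ge_zero zero_less_one, of z] by (intro mult_left_mono) auto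
    finally show ?thesis by simp
  qed
  moreover have "k \<le> r / 4" unfolding k_def by (rule min.cobounded1)
  then have "4 * k\<^sup>2 \<le> 4 * (r / 4)\<^sup>2" using \<open>0 < k\<close> by (intro mult_left_mono power_mono) auto
  moreover have "4 * (r / 4)\<^sup>2 = r\<^sup>2 / 4" by (simp add: power_divide)
  moreover have "0 < r\<^sup>2" using \<open>0 < r\<close> by simp
  ultimately have small: "8 * k * norm z + 4 * k\<^sup>2 < r\<^sup>2" by linarith
  have "\<exists>e>0. \<forall>x\<in>K e. norm z - k \<le> norm x"
    using mono midpoint limit min \<open>0 < k\<close> by (rule min_norm_elem_approx_lower_bound)
  then obtain e where "0 < e" and e: "\<And>x. x \<in> K e \<Longrightarrow> norm z - k \<le> norm x" by blast
  have "z \<in> K e" using min mono[of 0 e] \<open>0 < e\<close> by (auto simp: min_norm_elem_def)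
  from order_tendstoD(2)[OF assms(5) \<open>0 < e\<close>] assms(6,7)
  show "\<forall>\<^sub>F s in F. dist (\<eta> s) z < r"
  proof eventually_elim
    case (elim s)
    then have "\<eta> s \<in> K e" using mono[of "\<epsilon> s" e] by auto
    then have "norm z - k \<le> norm ((1/2) *\<^sub>R (\<eta> s + z))" using e midpoint \<open>z \<in> K e\<close> by blast
    with elim \<open>0 < k\<close> have "(dist (\<eta> s) z)\<^sup>2 < r\<^sup>2"
      using small dist_sq_le_of_midpoint_norm[of "\<eta> s" z k] by linarith
    then show ?case using \<open>0 < r\<close> by (simp add: power_less_imp_less_base)
  qed
qed

section \<open>Convex absolutely homogeneous functionals\<close>

locale convex_homogeneous_functional =
  fixes J :: "'a::real_inner \<Rightarrow> ereal" and p :: real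
  assumes convex: "convex_fun J" and proper: "proper_fun J" and homogeneous: "abs_homogeneous p J"
begin

text \<open>\<open>Jr v = 0\<close> where \<open>J v = \<infinity>\<close>; it is only used at points where \<open>J\<close> is finite.\<close>
definition Jr :: "'a \<Rightarrow> real" where "Jr v = real_of_ereal (J v)"

lemma J_zero: "J 0 = 0"
  using homogeneous by (simp add: abs_homogeneous_def)

lemma J_scaleR: "c \<noteq> 0 \<Longrightarrow> J (c *\<^sub>R v) = ereal (\<bar>c\<bar> powr p) * J v"
  using homogeneous by (simp add: abs_homogeneous_def)

lemma J_not_MInfty: "J v \<noteq> -\<infinity>"
  using proper by (simp add: proper_fun_def)

lemma J_convex:
  "0 \<le> \<theta> \<Longrightarrow> \<theta> \<le> 1 \<Longrightarrow> J ((1 - \<theta>) *\<^sub>R x + \<theta> *\<^sub>R y) \<le> ereal (1 - \<theta>) * J x + ereal \<theta> * J y"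
  using convex by (simp add: convex_fun_def)

lemma J_nonneg: "0 \<le> J v"
proof -
  have "J ((1 - 1/2) *\<^sub>R v + (1/2) *\<^sub>R (-v)) \<le> ereal (1 - 1/2) * J v + ereal (1/2) * J (-v)"
    by (rule J_convex) auto
  moreover have "J (-v) = J v" using J_scaleR[of "-1" v] by simp
  ultimately have "0 \<le> ereal (1/2) * J v + ereal (1/2) * J v" by (simp add: J_zero)
  then show ?thesis using J_not_MInfty[of v] by (cases "J v") auto
qed

lemma Jr_nonneg: "0 \<le> Jr v"
  using J_nonneg[of v] by (cases "J v") (auto simp: Jr_def)

lemma J_eq_Jr: "J v \<noteq> \<infinity> \<Longrightarrow> J v = ereal (Jr v)"
  using J_not_MInfty[of v] by (cases "J v") (auto simp: Jr_def)

lemma Jr_le: "J v \<le> ereal c \<Longrightarrow> Jr v \<le> c"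
  using J_not_MInfty[of v] by (cases "J v") (auto simp: Jr_def)

lemma subdiff_imp_finite:
  assumes "\<zeta> \<in> subdiff J v"
  shows "J v \<noteq> \<infinity>"
proof
  assume "J v = \<infinity>"
  obtain w where "J w \<noteq> \<infinity>" using proper by (auto simp: proper_fun_def)
  moreover have "J v + ereal (\<zeta> \<bullet> (w - v)) \<le> J w" using assms by (simp add: subdiff_def)
  ultimately show False using \<open>J v = \<infinity>\<close> by simp
qed

lemma subgradient_le:
  assumes "\<zeta> \<in> subdiff J v" "J w \<noteq> \<infinity>"
  shows "Jr v + \<zeta> \<bullet> (w - v) \<le> Jr w"
proof -
  have "J v + ereal (\<zeta> \<bullet> (w - v)) \<le> J w" using assms(1) by (simp add: subdiff_def)
  then show ?thesis using J_eq_Jr[OF subdiff_imp_finite[OF assms(1)]] J_eq_Jr[OF assms(2)] by simp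
qed

lemma subdiff_iff_subgradient_le:
  assumes "J v \<noteq> \<infinity>"
  shows "\<zeta> \<in> subdiff J v \<longleftrightarrow> (\<forall>w. J w \<noteq> \<infinity> \<longrightarrow> Jr v + \<zeta> \<bullet> (w - v) \<le> Jr w)"
proof (intro iffI allI impI)
  assume le: "\<forall>w. J w \<noteq> \<infinity> \<longrightarrow> Jr v + \<zeta> \<bullet> (w - v) \<le> Jr w"
  show "\<zeta> \<in> subdiff J v" unfolding subdiff_def
  proof (intro CollectI allI)
    fix w show "J v + ereal (\<zeta> \<bullet> (w - v)) \<le> J w"
      using le J_eq_Jr[OF assms] J_eq_Jr[of w] by (cases "J w = \<infinity>") auto
  qed
qed (use subgradient_le in blast)

lemma subdiff_monotone:
  assumes "\<zeta>\<^sub>1 \<in> subdiff J v\<^sub>1" "\<zeta>\<^sub>2 \<in> subdiff J v\<^sub>2"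
  shows "0 \<le> (\<zeta>\<^sub>1 - \<zeta>\<^sub>2) \<bullet> (v\<^sub>1 - v\<^sub>2)"
  using subgradient_le[OF assms(1) subdiff_imp_finite[OF assms(2)]]
    subgradient_le[OF assms(2) subdiff_imp_finite[OF assms(1)]]
  by (simp add: algebra_simps inner_diff_left inner_diff_right)

text \<open>Euler's identity for homogeneous functions: \<open>c \<mapsto> J (c v) = c powr p * J v\<close> is minimised,
  up to the linear term \<open>(c - 1) \<zeta> \<bullet> v\<close>, at \<open>c = 1\<close>.\<close>
lemma subdiff_inner_self:
  assumes "\<zeta> \<in> subdiff J v"
  shows "\<zeta> \<bullet> v = p * Jr v"
proof -
  define g where "g c = c powr p * Jr v - Jr v - (c - 1) * (\<zeta> \<bullet> v)" for c
  have Jv: "J v = ereal (Jr v)" using J_eq_Jr[OF subdiff_imp_finite[OF assms]] .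
  have "g 1 \<le> g c" if "\<bar>1 - c\<bar> < 1" for c
  proof -
    have "0 < c" using that by simp
    then have "J (c *\<^sub>R v) = ereal (c powr p * Jr v)" using J_scaleR[of c v] Jv by simp
    with subgradient_le[OF assms, of "c *\<^sub>R v"] have "Jr v + (c - 1) * (\<zeta> \<bullet> v) \<le> c powr p * Jr v"
      by (simp add: Jr_def inner_diff_right algebra_simps)
    then show ?thesis by (simp add: g_def)
  qed
  moreover have "(g has_real_derivative (p * 1 powr (p - 1) * Jr v - \<zeta> \<bullet> v)) (at 1)"
    unfolding g_def by (rule derivative_eq_intros has_real_derivative_powr | simp)+
  ultimately have "p * 1 powr (p - 1) * Jr v - \<zeta> \<bullet> v = 0"
    by (intro DERIV_local_min[of g _ 1 1]) auto
  then show ?thesis by simp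
qed

text \<open>Writing \<open>v + s n\<close> as a convex combination of \<open>v / \<theta>\<close> and a multiple of \<open>n\<close> and letting
  \<open>\<theta> \<rightarrow> 1\<close> shows \<open>s (\<zeta> \<bullet> n) \<le> 0\<close> for every real \<open>s\<close>.\<close>
lemma subdiff_orthogonal_null_set:
  assumes \<zeta>: "\<zeta> \<in> subdiff J v" and n: "n \<in> null_set J"
  shows "\<zeta> \<bullet> n = 0"
proof -
  have Jv: "J v = ereal (Jr v)" using J_eq_Jr[OF subdiff_imp_finite[OF \<zeta>]] .
  have Jn: "J (c *\<^sub>R n) = 0" for c
    using n J_scaleR[of c n] J_zero by (cases "c = 0") (auto simp: null_set_def)
  have "s * (\<zeta> \<bullet> n) \<le> 0" for s
  proof -
    have le: "Jr v + s * (\<zeta> \<bullet> n) \<le> \<theta> * ((1/\<theta>) powr p * Jr v)" if "0 < \<theta>" "\<theta> < 1" for \<theta>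
    proof -
      have decomp: "\<theta> *\<^sub>R ((1/\<theta>) *\<^sub>R v) + (1 - \<theta>) *\<^sub>R ((s/(1 - \<theta>)) *\<^sub>R n) = v + s *\<^sub>R n"
        using that by simp
      have "J ((1 - (1 - \<theta>)) *\<^sub>R ((1/\<theta>) *\<^sub>R v) + (1 - \<theta>) *\<^sub>R ((s/(1 - \<theta>)) *\<^sub>R n))
          \<le> ereal (1 - (1 - \<theta>)) * J ((1/\<theta>) *\<^sub>R v) + ereal (1 - \<theta>) * J ((s/(1 - \<theta>)) *\<^sub>R n)"
        using that by (intro J_convex) auto
      then have "J (v + s *\<^sub>R n) \<le> ereal \<theta> * J ((1/\<theta>) *\<^sub>R v) + ereal (1 - \<theta>) * J ((s/(1 - \<theta>)) *\<^sub>R n)"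
        by (simp only: diff_diff_eq2 add_diff_cancel_left' decomp)
      also have "\<dots> = ereal (\<theta> * ((1/\<theta>) powr p * Jr v))"
        using J_scaleR[of "1/\<theta>" v] Jn Jv that by simp
      finally have J_le: "J (v + s *\<^sub>R n) \<le> ereal (\<theta> * ((1/\<theta>) powr p * Jr v))" .
      have "Jr v + \<zeta> \<bullet> (v + s *\<^sub>R n - v) \<le> Jr (v + s *\<^sub>R n)"
        using J_le by (intro subgradient_le[OF \<zeta>]) auto
      moreover have "Jr (v + s *\<^sub>R n) \<le> \<theta> * ((1/\<theta>) powr p * Jr v)" using Jr_le[OF J_le] .
      ultimately show ?thesis by simp
    qed
    have "((\<lambda>\<theta>. \<theta> * ((1/\<theta>) powr p * Jr v)) \<longlongrightarrow> 1 * ((1/1) powr p * Jr v)) (at_left 1)"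
      by (intro tendsto_intros) auto
    moreover have "\<forall>\<^sub>F \<theta> in at_left 1. Jr v + s * (\<zeta> \<bullet> n) \<le> \<theta> * ((1/\<theta>) powr p * Jr v)"
      unfolding eventually_at_left_field by (intro exI[of _ 0]) (auto intro: le)
    ultimately have "Jr v + s * (\<zeta> \<bullet> n) \<le> 1 * ((1/1) powr p * Jr v)"
      by (intro tendsto_le[OF trivial_limit_at_left_real _ tendsto_const])
    then show ?thesis by simp
  qed
  from this[of 1] this[of "-1"] show ?thesis by simp
qed

definition eps_subdiff :: "real \<Rightarrow> 'a \<Rightarrow> 'a set" where
  "eps_subdiff e v = {\<eta>. \<forall>w. J w \<noteq> \<infinity> \<longrightarrow> Jr v + \<eta> \<bullet> (w - v) \<le> Jr w + e}"

lemma eps_subdiff_mono: "e \<le> e' \<Longrightarrow> eps_subdiff e v \<subseteq> eps_subdiff e' v"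
  by (force simp: eps_subdiff_def)

lemma eps_subdiff_midpoint:
  assumes "x \<in> eps_subdiff e v" "y \<in> eps_subdiff e v"
  shows "(1/2) *\<^sub>R (x + y) \<in> eps_subdiff e v"
proof (unfold eps_subdiff_def, intro CollectI allI impI)
  fix w assume "J w \<noteq> \<infinity>"
  with assms have "Jr v + x \<bullet> (w - v) \<le> Jr w + e" "Jr v + y \<bullet> (w - v) \<le> Jr w + e"
    by (auto simp: eps_subdiff_def)
  then show "Jr v + ((1/2) *\<^sub>R (x + y)) \<bullet> (w - v) \<le> Jr w + e"
    by (simp add: inner_add_left field_simps)
qed

lemma eps_subdiff_limit:
  assumes "X \<longlonglongrightarrow> m" "\<And>e. 0 < e \<Longrightarrow> \<forall>\<^sub>F n in sequentially. X n \<in> eps_subdiff e v"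
  shows "m \<in> eps_subdiff 0 v"
proof (unfold eps_subdiff_def, intro CollectI allI impI)
  fix w assume "J w \<noteq> \<infinity>"
  show "Jr v + m \<bullet> (w - v) \<le> Jr w + 0"
  proof (simp, rule field_le_epsilon)
    fix e :: real assume "0 < e"
    from assms(2)[OF this] have "\<forall>\<^sub>F n in sequentially. Jr v + X n \<bullet> (w - v) \<le> Jr w + e"
      by eventually_elim (use \<open>J w \<noteq> \<infinity>\<close> in \<open>auto simp: eps_subdiff_def\<close>)
    moreover have "(\<lambda>n. Jr v + X n \<bullet> (w - v)) \<longlonglongrightarrow> Jr v + m \<bullet> (w - v)"
      by (intro tendsto_intros assms(1))
    ultimately show "Jr v + m \<bullet> (w - v) \<le> Jr w + e"
      by (intro tendsto_le[OF sequentially_bot tendsto_const])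
  qed
qed

lemma eps_subdiff_zero: "J v \<noteq> \<infinity> \<Longrightarrow> eps_subdiff 0 v = subdiff J v"
  using subdiff_iff_subgradient_le by (auto simp: eps_subdiff_def)

lemma subdiff_imp_eps_subdiff:
  assumes "\<zeta> \<in> subdiff J x"
  shows "\<zeta> \<in> eps_subdiff (Jr v - Jr x + \<zeta> \<bullet> (x - v)) v"
proof (unfold eps_subdiff_def, intro CollectI allI impI)
  fix w assume "J w \<noteq> \<infinity>"
  from subgradient_le[OF assms this]
  show "Jr v + \<zeta> \<bullet> (w - v) \<le> Jr w + (Jr v - Jr x + \<zeta> \<bullet> (x - v))"
    by (simp add: inner_diff_right)
qed

lemma lambda1_le_rayleigh:
  assumes "v \<in> H0 J" "J v \<noteq> \<infinity>"
  shows "lambda1 p J \<le> ereal (rayleigh p J v)"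
proof -
  have "lambda1 p J \<le> ereal p * J v / ereal (norm v powr p)"
    unfolding lambda1_def using assms(1) by (rule INF_lower)
  also have "\<dots> = ereal (p * Jr v / norm v powr p)"
    using J_eq_Jr[OF assms(2)] assms(1) by (simp add: H0_def)
  also have "\<dots> = ereal (rayleigh p J v)" by (simp add: rayleigh_def Jr_def)
  finally show ?thesis .
qed

end

section \<open>The gradient flow\<close>

locale homogeneous_gradient_flow = convex_homogeneous_functional J p
  for J :: "'a::{real_inner, complete_space} \<Rightarrow> ereal" and p :: real +
  fixes f :: 'a and u :: "real \<Rightarrow> 'a"
  assumes lsc: "lsc_fun J" and p_pos: "0 < p" and flow: "gradient_flow J f u"
begin

definition zeta :: "real \<Rightarrow> 'a" where
  "zeta t = (SOME \<zeta>. min_norm_elem \<zeta> (subdiff J (u t)) \<and> (u has_vector_derivative - \<zeta>) (at_right t))"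

definition energy :: "real \<Rightarrow> real" where "energy t = Jr (u t)"

lemma zeta: "0 < t \<Longrightarrow> min_norm_elem (zeta t) (subdiff J (u t)) \<and> (u has_vector_derivative - zeta t) (at_right t)"
  unfolding zeta_def by (rule someI_ex) (use flow in \<open>auto simp: gradient_flow_def\<close>)

lemma zeta_subdiff: "0 < t \<Longrightarrow> zeta t \<in> subdiff J (u t)"
  using zeta by (simp add: min_norm_elem_def)

lemma flow_has_vector_derivative: "0 < t \<Longrightarrow> (u has_vector_derivative - zeta t) (at_right t)"
  using zeta by simp

lemma flow_difference_quotient:
  "0 < t \<Longrightarrow> ((\<lambda>s. (1 / (s - t)) *\<^sub>R (u s - u t)) \<longlongrightarrow> - zeta t) (at_right t)"
  using has_vector_derivative_imp_difference_quotient[OF flow_has_vector_derivative] .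

lemma flow_start: "u 0 = f"
  using flow by (simp add: gradient_flow_def)

lemma flow_continuous: "continuous_on {0..} u"
  using flow by (simp add: gradient_flow_def)

lemma flow_continuous_on: "0 \<le> a \<Longrightarrow> continuous_on {a..b} u"
  by (rule continuous_on_subset[OF flow_continuous]) auto

lemma flow_isCont: "0 < t \<Longrightarrow> isCont u t"
  using continuous_on_interior[OF flow_continuous, of t] by simp

lemma flow_tendsto_at_right:
  assumes "0 \<le> t"
  shows "(u \<longlongrightarrow> u t) (at_right t)"
proof (rule tendsto_within_subset)
  show "(u \<longlongrightarrow> u t) (at t within {0..})"
    using flow_continuous assms by (simp add: continuous_on_def)
qed (use assms in auto)

lemma J_flow_finite: "0 < t \<Longrightarrow> J (u t) \<noteq> \<infinity>"
  using subdiff_imp_finite[OF zeta_subdiff] .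

lemma J_flow: "0 < t \<Longrightarrow> J (u t) = ereal (energy t)"
  using J_eq_Jr[OF J_flow_finite] by (simp add: energy_def)

lemma energy_nonneg: "0 \<le> energy t"
  by (simp add: energy_def Jr_nonneg)

lemma zeta_inner_flow: "0 < t \<Longrightarrow> zeta t \<bullet> u t = p * energy t"
  using subdiff_inner_self[OF zeta_subdiff] by (simp add: energy_def)

lemma norm_flow_sq_has_derivative:
  "0 < t \<Longrightarrow> ((\<lambda>s. (norm (u s))\<^sup>2) has_real_derivative - 2 * p * energy t) (at_right t)"
  using has_real_derivative_norm_sq[OF flow_has_vector_derivative] zeta_inner_flow by (simp add: mult.assoc)

lemma norm_flow_antimono:
  assumes "0 \<le> s" "s \<le> t"
  shows "norm (u t) \<le> norm (u s)"
proof -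
  have "(norm (u t))\<^sup>2 \<le> (norm (u s))\<^sup>2"
  proof (rule nonincreasing_by_right_dini_continuous[OF assms(2)])
    show "continuous_on {s..t} (\<lambda>r. (norm (u r))\<^sup>2)"
      using assms(1) by (intro continuous_intros flow_continuous_on)
    show "\<forall>\<^sub>F y in at_right x. (norm (u y))\<^sup>2 \<le> (norm (u x))\<^sup>2 + e * (y - x)"
      if "s < x" "x < t" "0 < e" for x e
      using that assms mult_nonneg_nonneg[OF less_imp_le[OF p_pos] energy_nonneg[of x]]
      by (intro right_dini_le_of_derivative[OF norm_flow_sq_has_derivative]) auto
  qed
  then show ?thesis by (simp add: power_mono_iff)
qed

lemma flow_orthogonal_null_set:
  assumes "0 \<le> t" and n: "n \<in> null_set J" and f: "f \<in> H0 J"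
  shows "u t \<bullet> n = 0"
proof -
  have "u t \<bullet> n = u 0 \<bullet> n"
  proof (rule constant_by_right_derivative_zero[OF assms(1)])
    show "continuous_on {0..t} (\<lambda>s. u s \<bullet> n)" by (intro continuous_intros flow_continuous_on) simp
    show "((\<lambda>s. u s \<bullet> n) has_real_derivative 0) (at_right x)" if "0 < x" for x
      using has_real_derivative_inner_const[OF flow_has_vector_derivative[OF that], of n]
        subdiff_orthogonal_null_set[OF zeta_subdiff[OF that] n]
      by simp
  qed
  then show ?thesis using f n by (simp add: flow_start H0_def)
qed

lemma flow_shift_has_vector_derivative:
  assumes "0 < x" "0 \<le> h"
  shows "((\<lambda>y. u (y + h)) has_vector_derivative - zeta (x + h)) (at_right x)"
proof -
  have "(\<lambda>y. y + h) ` {x<..} = {x + h<..}"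
    by (auto simp: image_iff intro!: bexI[where x = "_ - h"])
  then have "(u has_vector_derivative - zeta (x + h)) (at ((\<lambda>y. y + h) x) within (\<lambda>y. y + h) ` {x<..})"
    using flow_has_vector_derivative[of "x + h"] assms by simp
  moreover have "((\<lambda>y. y + h) has_vector_derivative 1) (at_right x)"
    by (auto intro!: derivative_eq_intros)
  ultimately show ?thesis
    using vector_diff_chain_within[of "\<lambda>y. y + h" 1 x "{x<..}" u] by (simp add: o_def)
qed

lemma norm_flow_increment_antimono:
  assumes "0 < t" "t \<le> s" "0 < h"
  shows "norm (u (s + h) - u s) \<le> norm (u (t + h) - u t)"
proof -
  define V where "V y = u (y + h) - u y" for y
  have "(norm (V s))\<^sup>2 \<le> (norm (V t))\<^sup>2"
  proof (rule nonincreasing_by_right_dini_continuous[OF assms(2)])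
    have "continuous_on {t..s} (\<lambda>y. u (y + h))"
      using assms by (intro continuous_on_compose2[OF flow_continuous_on[of "t + h" "s + h"]] continuous_intros) auto
    then show "continuous_on {t..s} (\<lambda>y. (norm (V y))\<^sup>2)"
      unfolding V_def using assms by (intro continuous_intros flow_continuous_on) auto
  next
    fix x e :: real assume x: "t < x" "x < s" "0 < e"
    with assms have "0 < x" by simp
    have V': "(V has_vector_derivative - zeta (x + h) - - zeta x) (at_right x)"
      unfolding V_def using \<open>0 < x\<close> \<open>0 < h\<close>
      by (intro derivative_intros flow_shift_has_vector_derivative flow_has_vector_derivative) auto
    have "0 \<le> (zeta (x + h) - zeta x) \<bullet> (u (x + h) - u x)"
      using \<open>0 < x\<close> \<open>0 < h\<close> by (intro subdiff_monotone zeta_subdiff) auto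
    then have less: "2 * ((- zeta (x + h) - - zeta x) \<bullet> V x) < e"
      using \<open>0 < e\<close> by (simp add: V_def inner_diff_left)
    show "\<forall>\<^sub>F y in at_right x. (norm (V y))\<^sup>2 \<le> (norm (V x))\<^sup>2 + e * (y - x)"
      using right_dini_le_of_derivative[OF has_real_derivative_norm_sq[OF V'] less] .
  qed
  then show ?thesis by (simp add: V_def power_mono_iff)
qed

lemma norm_zeta_antimono:
  assumes "0 < t" "t \<le> s"
  shows "norm (zeta s) \<le> norm (zeta t)"
proof -
  have quotient: "((\<lambda>h. norm ((1 / h) *\<^sub>R (u (r + h) - u r))) \<longlongrightarrow> norm (zeta r)) (at_right 0)"
    if "0 < r" for r
  proof -
    have "((\<lambda>h. (1 / ((h + r) - r)) *\<^sub>R (u (h + r) - u r)) \<longlongrightarrow> - zeta r) (at_right 0)"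
      using flow_difference_quotient[OF that] by (simp add: filterlim_at_right_to_0[of _ _ r])
    then show ?thesis by (auto simp: add.commute dest: tendsto_norm)
  qed
  have "\<forall>\<^sub>F h in at_right 0. norm ((1 / h) *\<^sub>R (u (s + h) - u s)) \<le> norm ((1 / h) *\<^sub>R (u (t + h) - u t))"
    using eventually_at_right_less
    by eventually_elim (use norm_flow_increment_antimono[OF assms] in \<open>auto intro: divide_right_mono\<close>)
  with quotient[of t] quotient[of s] assms show ?thesis
    by (intro tendsto_le[OF trivial_limit_at_right_real]) auto
qed

lemma energy_lsc:
  assumes "0 < t" "c < energy t"
  shows "\<forall>\<^sub>F s in at t within S. c < energy s"
proof -
  have "open (- {x. J x \<le> ereal c})" using lsc by (auto simp: lsc_fun_def)
  moreover have "u t \<in> - {x. J x \<le> ereal c}" using J_flow[OF assms(1)] assms(2) by simp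
  ultimately have "\<forall>\<^sub>F s in at t. u s \<in> - {x. J x \<le> ereal c}"
    using flow_isCont[OF assms(1)] by (intro topological_tendstoD) (auto simp: isCont_def)
  moreover have "\<forall>\<^sub>F s in at t. 0 < s" using order_tendstoD(1)[OF tendsto_ident_at assms(1)] .
  ultimately have "\<forall>\<^sub>F s in at t. c < energy s" by eventually_elim (auto simp: J_flow)
  then show ?thesis by (rule filter_leD[OF at_le[OF subset_UNIV]])
qed

lemma energy_diff_le:
  assumes "0 < s" "J (u t) \<noteq> \<infinity>"
  shows "energy s - energy t \<le> zeta s \<bullet> (u s - u t)"
  using subgradient_le[OF zeta_subdiff[OF assms(1)] assms(2)] by (simp add: energy_def inner_diff_right)

lemma zeta_subgradient_error_tendsto:
  assumes "0 < t"
  shows "((\<lambda>s. energy t - energy s + zeta s \<bullet> (u s - u t)) \<longlongrightarrow> 0) (at_right t)"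
proof (rule tendstoI)
  fix r :: real assume "0 < r"
  have "\<forall>\<^sub>F s in at_right t. energy t - r/2 < energy s"
    using \<open>0 < r\<close> by (intro energy_lsc assms) simp
  moreover have "((\<lambda>s. norm (zeta t) * norm (u s - u t)) \<longlongrightarrow> norm (zeta t) * norm (u t - u t)) (at_right t)"
    using assms by (intro tendsto_intros flow_tendsto_at_right) simp
  then have "\<forall>\<^sub>F s in at_right t. norm (zeta t) * norm (u s - u t) < r/2"
    using \<open>0 < r\<close> by (intro order_tendstoD(2)) auto
  ultimately show "\<forall>\<^sub>F s in at_right t. dist (energy t - energy s + zeta s \<bullet> (u s - u t)) 0 < r"
    using eventually_at_right_less
  proof eventually_elim
    case (elim s)
    have "zeta s \<bullet> (u s - u t) \<le> norm (zeta s) * norm (u s - u t)" by (rule norm_cauchy_schwarz)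
    also have "\<dots> \<le> norm (zeta t) * norm (u s - u t)"
      using norm_zeta_antimono[OF assms] elim by (intro mult_right_mono) auto
    finally have "energy t - energy s + zeta s \<bullet> (u s - u t) < r" using elim by simp
    moreover have "energy s - energy t \<le> zeta s \<bullet> (u s - u t)"
      using assms elim by (intro energy_diff_le J_flow_finite) auto
    ultimately show ?case by (simp add: dist_real_def)
  qed
qed

text \<open>As \<open>s \<down> t\<close>, the \<open>zeta s\<close> are approximate subgradients at \<open>u t\<close>, no longer than \<open>zeta t\<close>,
  with vanishing error; such elements converge to the minimal-norm subgradient.\<close>
lemma zeta_tendsto_at_right:
  assumes "0 < t"
  shows "(zeta \<longlongrightarrow> zeta t) (at_right t)"
proof (rule tendsto_min_norm_elem_of_approx[where K = "\<lambda>e. eps_subdiff e (u t)"])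
  show "eps_subdiff e (u t) \<subseteq> eps_subdiff e' (u t)" if "e \<le> e'" for e e'
    using that by (rule eps_subdiff_mono)
  show "(1/2) *\<^sub>R (x + y) \<in> eps_subdiff e (u t)" if "x \<in> eps_subdiff e (u t)" "y \<in> eps_subdiff e (u t)" for e x y
    using that by (rule eps_subdiff_midpoint)
  show "m \<in> eps_subdiff 0 (u t)"
    if "X \<longlonglongrightarrow> m" "\<And>e. 0 < e \<Longrightarrow> \<forall>\<^sub>F n in sequentially. X n \<in> eps_subdiff e (u t)" for X m
    using that by (rule eps_subdiff_limit)
  show "min_norm_elem (zeta t) (eps_subdiff 0 (u t))"
    using zeta[OF assms] eps_subdiff_zero[OF J_flow_finite[OF assms]] by simp
  show "\<forall>\<^sub>F s in at_right t. zeta s \<in> eps_subdiff (energy t - energy s + zeta s \<bullet> (u s - u t)) (u t)"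
    using eventually_at_right_less
    by eventually_elim (use assms subdiff_imp_eps_subdiff[OF zeta_subdiff] in \<open>simp add: energy_def\<close>)
  show "\<forall>\<^sub>F s in at_right t. norm (zeta s) \<le> norm (zeta t)"
    using eventually_at_right_less by eventually_elim (use assms norm_zeta_antimono in simp)
qed (rule zeta_subgradient_error_tendsto[OF assms])

lemma energy_diff_le_quotient:
  assumes "0 < t"
  shows "\<forall>\<^sub>F s in at_right t. energy s - energy t \<le> (s - t) * (zeta s \<bullet> ((1 / (s - t)) *\<^sub>R (u s - u t)))"
  using eventually_at_right_less
  by eventually_elim (use assms energy_diff_le J_flow_finite in auto)

lemma zeta_inner_quotient_tendsto:
  "0 < t \<Longrightarrow> ((\<lambda>s. zeta s \<bullet> ((1 / (s - t)) *\<^sub>R (u s - u t))) \<longlongrightarrow> - (norm (zeta t))\<^sup>2) (at_right t)"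
  using tendsto_inner[OF zeta_tendsto_at_right flow_difference_quotient, of t]
  by (simp add: power2_norm_eq_inner)

lemma energy_antimono:
  assumes "0 < s" "s \<le> t"
  shows "energy t \<le> energy s"
proof (rule nonincreasing_by_right_dini[OF assms(2)])
  show "\<forall>\<^sub>F y in at_left x. c < energy y" if "s < x" "c < energy x" for x c
    using that assms by (intro energy_lsc) auto
  show "\<forall>\<^sub>F y in at_right s. energy y < c" if "energy s < c" for c
    using right_usc_of_quotient_bound[OF zeta_inner_quotient_tendsto energy_diff_le_quotient that] assms
    by simp
  show "\<forall>\<^sub>F y in at_right x. energy y \<le> energy x + e * (y - x)" if "s < x" "0 < e" for x e
  proof (rule right_dini_le_of_quotient_bound[OF zeta_inner_quotient_tendsto _ energy_diff_le_quotient])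
    show "- (norm (zeta x))\<^sup>2 < e" using \<open>0 < e\<close> zero_le_power2[of "norm (zeta x)"] by linarith
  qed (use that assms in auto)
qed

lemma energy_le_initial:
  assumes "J f \<noteq> \<infinity>" "0 < t"
  shows "energy t \<le> Jr f"
proof -
  define N where "N s = (norm (u s - f))\<^sup>2" for s
  define F where "F s = (1/2) * N s - s * Jr f + s * energy t" for s
  have "F t \<le> F 0"
  proof (rule nonincreasing_by_right_dini_continuous[where F = F and a = 0 and b = t])
    show "continuous_on {0..t} F"
      unfolding F_def N_def by (intro continuous_intros flow_continuous_on) simp
  next
    fix x e :: real assume x: "0 < x" "x < t" "0 < e"
    have "((\<lambda>s. u s - f) has_vector_derivative - zeta x) (at_right x)"
      using flow_has_vector_derivative[OF x(1)] by (auto intro: derivative_eq_intros)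
    from has_real_derivative_norm_sq[OF this]
    have "(N has_real_derivative 2 * (- zeta x \<bullet> (u x - f))) (at_right x)"
      unfolding N_def[abs_def] .
    then have DF: "(F has_real_derivative (1/2) * (2 * (- zeta x \<bullet> (u x - f))) - 1 * Jr f + 1 * energy t) (at_right x)"
      unfolding F_def[abs_def] by (intro DERIV_add DERIV_diff DERIV_cmult DERIV_cmult_right DERIV_ident)
    have "Jr (u x) + zeta x \<bullet> (f - u x) \<le> Jr f"
      using subgradient_le[OF zeta_subdiff[OF x(1)] assms(1)] .
    moreover have "energy t \<le> energy x" using energy_antimono x by simp
    ultimately show "\<forall>\<^sub>F y in at_right x. F y \<le> F x + e * (y - x)"
      using x(3) by (intro right_dini_le_of_derivative[OF DF]) (auto simp: energy_def inner_diff_right field_simps)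
  qed (use assms in simp)
  then have "(1/2) * (norm (u t - f))\<^sup>2 \<le> t * (Jr f - energy t)"
    by (simp add: F_def N_def flow_start algebra_simps)
  moreover have "0 \<le> (1/2) * (norm (u t - f))\<^sup>2" by simp
  ultimately have "0 \<le> t * (Jr f - energy t)" by linarith
  then show ?thesis using assms(2) by (simp add: zero_le_mult_iff)
qed

lemma energy_right_usc:
  assumes "0 \<le> t" "J (u t) \<noteq> \<infinity>" "energy t < c"
  shows "\<forall>\<^sub>F s in at_right t. energy s < c"
proof (cases "t = 0")
  case True
  have "energy s < c" if "0 < s" for s
    using energy_le_initial[of s] assms that True by (simp add: flow_start energy_def)
  with eventually_at_right_less[of 0] True show ?thesis by (auto elim: eventually_mono)
next
  case False
  with assms show ?thesis
    by (intro right_usc_of_quotient_bound[OF zeta_inner_quotient_tendsto energy_diff_le_quotient]) auto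
qed

lemma energy_flow_zero: "u t = 0 \<Longrightarrow> energy t = 0"
  by (simp add: energy_def Jr_def J_zero)

lemma norm_flow_powr_tendsto:
  "(u \<longlongrightarrow> u x) F \<Longrightarrow> ((\<lambda>s. norm (u s) powr p) \<longlongrightarrow> norm (u x) powr p) F"
  using p_pos by (intro tendsto_powr' tendsto_norm) auto

lemma norm_flow_powr_has_derivative:
  assumes "0 < x" "u x \<noteq> 0"
  shows "((\<lambda>s. norm (u s) powr p) has_real_derivative - (p\<^sup>2 * energy x * norm (u x) powr (p - 2))) (at_right x)"
proof -
  have "0 < (norm (u x))\<^sup>2" using assms(2) by simp
  from DERIV_chain2[OF has_real_derivative_powr[OF this] norm_flow_sq_has_derivative[OF assms(1)], of "p / 2"]
  have "((\<lambda>s. ((norm (u s))\<^sup>2) powr (p / 2)) has_real_derivative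
      p / 2 * ((norm (u x))\<^sup>2) powr ((p - 2) / 2) * (- 2 * p * energy x)) (at_right x)"
    by (simp add: diff_divide_distrib)
  moreover have "(\<lambda>s. ((norm (u s))\<^sup>2) powr (p / 2)) = (\<lambda>s. norm (u s) powr p)"
    by (simp add: powr_half_power2)
  moreover have "((norm (u x))\<^sup>2) powr ((p - 2) / 2) = norm (u x) powr (p - 2)"
    by (simp add: powr_half_power2)
  moreover have "p / 2 * norm (u x) powr (p - 2) * (- 2 * p * energy x) = - (p\<^sup>2 * energy x * norm (u x) powr (p - 2))"
    by (simp add: power2_eq_square)
  ultimately show ?thesis by (simp only:)
qed

lemma rayleigh_derivative_le:
  assumes "0 < x" "0 \<le> K" "K * norm (u x) powr p < energy x"
  shows "K * (p\<^sup>2 * energy x * norm (u x) powr (p - 2)) \<le> (norm (zeta x))\<^sup>2"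
proof -
  have "u x \<noteq> 0" using assms(3) energy_flow_zero by force
  define g where "g = norm (u x)"
  have "0 < g" using \<open>u x \<noteq> 0\<close> by (simp add: g_def)
  have "\<bar>zeta x \<bullet> u x\<bar> \<le> norm (zeta x) * g" using Cauchy_Schwarz_ineq2 by (simp add: g_def)
  then have "\<bar>zeta x \<bullet> u x\<bar>\<^sup>2 \<le> (norm (zeta x) * g)\<^sup>2" by (rule power_mono) simp
  then have CS: "(p * energy x)\<^sup>2 \<le> (norm (zeta x) * g)\<^sup>2" by (simp add: zeta_inner_flow[OF assms(1)])
  have "g powr (p - 2) = g powr p / g\<^sup>2" using \<open>0 < g\<close> by (simp add: powr_diff)
  then have "K * (p\<^sup>2 * energy x * g powr (p - 2)) = p\<^sup>2 * energy x * (K * g powr p) / g\<^sup>2" by simp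
  also have "\<dots> \<le> p\<^sup>2 * energy x * energy x / g\<^sup>2"
    using assms(3) energy_nonneg[of x] \<open>0 < g\<close>
    by (intro divide_right_mono mult_left_mono) (auto simp: g_def)
  also have "\<dots> = (p * energy x)\<^sup>2 / g\<^sup>2" by (simp add: power2_eq_square)
  also have "\<dots> \<le> (norm (zeta x))\<^sup>2"
    using CS \<open>0 < g\<close> by (simp add: divide_le_eq power_mult_distrib)
  finally show ?thesis by (simp add: g_def)
qed

lemma rayleigh_right_dini:
  assumes "0 < x" "0 \<le> K" "K * norm (u x) powr p < energy x" "0 < e"
  shows "\<forall>\<^sub>F s in at_right x.
           energy s - K * norm (u s) powr p \<le> energy x - K * norm (u x) powr p + e * (s - x)"
proof -
  define N where "N s = norm (u s) powr p" for s
  have "u x \<noteq> 0" using assms(3) energy_flow_zero p_pos by force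
  define Q where "Q s = zeta s \<bullet> ((1 / (s - x)) *\<^sub>R (u s - u x)) - K * ((N s - N x) / (s - x))" for s
  have "(Q \<longlongrightarrow> - (norm (zeta x))\<^sup>2 - K * - (p\<^sup>2 * energy x * norm (u x) powr (p - 2))) (at_right x)"
    unfolding Q_def using norm_flow_powr_has_derivative[OF assms(1) \<open>u x \<noteq> 0\<close>]
    by (intro tendsto_intros zeta_inner_quotient_tendsto assms(1)) (simp add: N_def has_field_derivative_iff)
  moreover have "- (norm (zeta x))\<^sup>2 - K * - (p\<^sup>2 * energy x * norm (u x) powr (p - 2)) < e"
    using rayleigh_derivative_le[OF assms(1-3)] assms(4) by simp
  moreover have "\<forall>\<^sub>F s in at_right x. energy s - K * N s - (energy x - K * N x) \<le> (s - x) * Q s"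
    using energy_diff_le_quotient[OF assms(1)] eventually_at_right_less
  proof eventually_elim
    case (elim s)
    then have "(s - x) * Q s = (s - x) * (zeta s \<bullet> ((1 / (s - x)) *\<^sub>R (u s - u x))) - K * (N s - N x)"
      by (simp add: Q_def field_simps)
    with elim show ?case by (simp add: right_diff_distrib)
  qed
  ultimately have "\<forall>\<^sub>F s in at_right x. energy s - K * N s \<le> energy x - K * N x + e * (s - x)"
    by (rule right_dini_le_of_quotient_bound)
  then show ?thesis by (simp add: N_def)
qed

lemma rayleigh_quotient_antimono:
  assumes "0 \<le> \<delta>" "\<delta> \<le> t" "u \<delta> \<noteq> 0" "J (u \<delta>) \<noteq> \<infinity>"
  shows "energy t \<le> energy \<delta> / norm (u \<delta>) powr p * norm (u t) powr p"
proof -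
  define K where "K = energy \<delta> / norm (u \<delta>) powr p"
  have "0 \<le> K" using energy_nonneg by (simp add: K_def)
  have K_tendsto: "((\<lambda>s. K * norm (u s) powr p) \<longlongrightarrow> K * norm (u x) powr p) F" if "(u \<longlongrightarrow> u x) F" for x F
    by (intro tendsto_intros norm_flow_powr_tendsto that)
  have "energy t - K * norm (u t) powr p \<le> 0"
  proof (rule nonpos_by_right_dini[where F = "\<lambda>s. energy s - K * norm (u s) powr p", OF assms(2)])
    show "energy \<delta> - K * norm (u \<delta>) powr p \<le> 0" using assms(3) by (simp add: K_def)
  next
    fix x c assume x: "\<delta> < x" "x \<le> t" "c < energy x - K * norm (u x) powr p"
    have "(u \<longlongrightarrow> u x) (at_left x)"
      using flow_isCont[of x] x assms(1) by (simp add: isCont_def filterlim_at_split)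
    moreover have "\<forall>\<^sub>F y in at_left x. c' < energy y" if "c' < energy x" for c'
      using x assms(1) that by (intro energy_lsc) auto
    ultimately show "\<forall>\<^sub>F y in at_left x. c < energy y - K * norm (u y) powr p"
      using x(3) by (intro eventually_gt_diff_tendsto K_tendsto)
  next
    fix x c assume x: "\<delta> \<le> x" "x < t" "energy x - K * norm (u x) powr p < c"
    have "J (u x) \<noteq> \<infinity>" using assms(1,4) J_flow_finite[of x] x by (cases "x = \<delta>") auto
    then show "\<forall>\<^sub>F y in at_right x. energy y - K * norm (u y) powr p < c"
      using x assms(1) flow_tendsto_at_right[of x]
      by (intro eventually_diff_less_tendsto[OF energy_right_usc] K_tendsto) auto
  next
    fix x e :: real assume "\<delta> < x" "x < t" "0 < energy x - K * norm (u x) powr p" "0 < e"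
    with assms(1) \<open>0 \<le> K\<close> show "\<forall>\<^sub>F s in at_right x.
        energy s - K * norm (u s) powr p \<le> energy x - K * norm (u x) powr p + e * (s - x)"
      by (intro rayleigh_right_dini) auto
  qed
  then show ?thesis by (simp add: K_def)
qed

end

section \<open>Decay bounds under coercivity\<close>

locale coercive_gradient_flow = homogeneous_gradient_flow +
  assumes p_ge_2: "2 \<le> p" and coercive: "0 < lambda1 p J" and initial: "f \<in> H0 J"
begin

definition lam1 :: real where "lam1 = real_of_ereal (lambda1 p J)"

definition decay_rate :: real where "decay_rate = lam1 * norm f powr (p - 2)"

lemma flow_in_H0: "0 \<le> t \<Longrightarrow> u t \<noteq> 0 \<Longrightarrow> u t \<in> H0 J"
  using flow_orthogonal_null_set[OF _ _ initial] by (auto simp: H0_def)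

lemma lambda1_eq: "lambda1 p J = ereal lam1" and lam1_pos: "0 < lam1"
proof -
  have "f \<noteq> 0" using initial by (simp add: H0_def)
  with flow_tendsto_at_right[of 0] have "\<forall>\<^sub>F s in at_right 0. u s \<noteq> 0"
    by (intro tendsto_imp_eventually_ne) (auto simp: flow_start)
  with eventually_at_right_less[of 0] have "\<forall>\<^sub>F s in at_right 0. 0 < s \<and> u s \<noteq> 0"
    by eventually_elim simp
  then obtain t where "0 < t" "u t \<noteq> 0"
    using eventually_happens'[OF trivial_limit_at_right_real] by blast
  then have "lambda1 p J \<le> ereal (rayleigh p J (u t))"
    by (intro lambda1_le_rayleigh flow_in_H0 J_flow_finite) auto
  with coercive show "lambda1 p J = ereal lam1" "0 < lam1"
    unfolding lam1_def by (cases "lambda1 p J"; auto)+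
qed

lemma lam1_le_rayleigh: "v \<in> H0 J \<Longrightarrow> J v \<noteq> \<infinity> \<Longrightarrow> lam1 \<le> rayleigh p J v"
  using lambda1_le_rayleigh lambda1_eq by fastforce

lemma rayleigh_flow: "rayleigh p J (u t) = p * energy t / norm (u t) powr p"
  by (simp add: rayleigh_def energy_def Jr_def)

lemma coercive_flow:
  assumes "0 < t"
  shows "lam1 * norm (u t) powr p \<le> p * energy t"
proof (cases "u t = 0")
  case False
  then have "lam1 \<le> p * energy t / norm (u t) powr p"
    using lam1_le_rayleigh[OF flow_in_H0 J_flow_finite] assms by (simp add: rayleigh_flow)
  with False show ?thesis by (simp add: pos_le_divide_eq)
qed (use energy_nonneg p_pos in simp)

lemma norm_flow_le_bernoulli:
  assumes "0 \<le> s" "s \<le> t"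
  shows "norm (u t) \<le> bernoulli_solution p lam1 (norm (u s)) (t - s)"
proof (rule bernoulli_comparison_upper[OF p_ge_2 less_imp_le[OF lam1_pos] assms(2)])
  show "continuous_on {s..t} (\<lambda>r. norm (u r))"
    using assms by (intro continuous_intros flow_continuous_on)
  show "((\<lambda>r. (norm (u r))\<^sup>2) has_real_derivative - 2 * p * energy x) (at_right x)" if "s < x" for x
    using that assms by (intro norm_flow_sq_has_derivative) auto
  show "- 2 * p * energy x \<le> - 2 * lam1 * norm (u x) powr p" if "s < x" for x
    using coercive_flow[of x] that assms by simp
qed simp

lemma norm_flow_ge_bernoulli:
  assumes "0 \<le> \<delta>" "\<delta> \<le> t" "u \<delta> \<noteq> 0" "J (u \<delta>) \<noteq> \<infinity>"
  shows "bernoulli_solution p (rayleigh p J (u \<delta>)) (norm (u \<delta>)) (t - \<delta>) \<le> norm (u t)"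
proof (rule bernoulli_comparison_lower[OF p_ge_2 _ assms(2)])
  show "0 \<le> rayleigh p J (u \<delta>)" using energy_nonneg p_pos by (simp add: rayleigh_flow)
  show "continuous_on {\<delta>..t} (\<lambda>r. norm (u r))"
    using assms by (intro continuous_intros flow_continuous_on)
  show "((\<lambda>r. (norm (u r))\<^sup>2) has_real_derivative - 2 * p * energy x) (at_right x)" if "\<delta> < x" for x
    using that assms by (intro norm_flow_sq_has_derivative) auto
  show "- 2 * rayleigh p J (u \<delta>) * norm (u x) powr p \<le> - 2 * p * energy x" if "\<delta> < x" "x < t" for x
  proof -
    have "energy x \<le> energy \<delta> / norm (u \<delta>) powr p * norm (u x) powr p"
      using that by (intro rayleigh_quotient_antimono assms) auto
    then have "2 * p * energy x \<le> 2 * p * (energy \<delta> / norm (u \<delta>) powr p * norm (u x) powr p)"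
      using p_pos by (intro mult_left_mono) auto
    then show ?thesis by (simp add: rayleigh_flow)
  qed
qed simp

lemma decay_rate_nonneg: "0 \<le> decay_rate"
  using lam1_pos by (simp add: decay_rate_def)

lemma profile_pos: "0 \<le> t \<Longrightarrow> 0 < a_fun p decay_rate t"
  using a_fun_pos[OF p_ge_2 decay_rate_nonneg] .

lemma profile_le_initial:
  assumes "0 \<le> t"
  shows "norm (u t) / a_fun p decay_rate t \<le> norm f"
proof -
  have "norm (u t) \<le> norm f * a_fun p decay_rate t"
    using norm_flow_le_bernoulli[of 0 t] assms
    by (simp add: bernoulli_solution_def decay_rate_def flow_start)
  then show ?thesis using profile_pos[OF assms] by (simp add: divide_le_eq)
qed

lemma profile_lower_bound:
  assumes "2 < p" "0 \<le> \<delta>" "\<delta> \<le> t" "J (u \<delta>) \<noteq> \<infinity>"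
  shows "lam1 * norm (u \<delta>) powr (p - 2) / rayleigh p J (u \<delta>)
           \<le> (norm (u t) / a_fun p decay_rate t) powr (p - 2)"
proof (cases "u \<delta> = 0")
  case False
  define k where "k = p - 2"
  define R where "R = rayleigh p J (u \<delta>)"
  define X where "X = norm (u \<delta>) powr k"
  have "0 < k" "0 < X" using assms(1) False by (simp_all add: k_def X_def)
  have "lam1 \<le> R" unfolding R_def using assms(2,4) False by (intro lam1_le_rayleigh flow_in_H0)
  with lam1_pos have "0 < R" by simp
  have "lam1 * X \<le> decay_rate"
    using norm_flow_antimono[of 0 \<delta>] assms(2) \<open>0 < k\<close> lam1_pos
    by (auto simp: X_def k_def decay_rate_def flow_start intro: powr_mono2)
  have "norm (u \<delta>) * a_fun p (R * norm (u \<delta>) powr (p - 2)) (t - \<delta>) \<le> norm (u t)"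
    using norm_flow_ge_bernoulli[OF assms(2,3) False assms(4)] by (simp add: R_def bernoulli_solution_def)
  then have "(norm (u \<delta>) * a_fun p (R * X) (t - \<delta>)) powr k \<le> norm (u t) powr k"
    using \<open>0 < k\<close> \<open>0 < R\<close> \<open>0 < X\<close> assms(3) a_fun_pos[OF p_ge_2, of "R * X" "t - \<delta>"]
    by (intro powr_mono2) (auto simp: X_def k_def)
  then have lower: "X / (1 + k * R * X * (t - \<delta>)) \<le> norm (u t) powr k"
    using assms(1,3) \<open>0 < R\<close> \<open>0 < X\<close> by (simp add: powr_mult a_fun_powr X_def k_def mult.assoc)
  have "lam1 * X / R \<le> X * (1 + k * decay_rate * t) / (1 + k * R * X * (t - \<delta>))"
    using lam1_pos \<open>lam1 \<le> R\<close> \<open>0 < X\<close> \<open>lam1 * X \<le> decay_rate\<close> assms(2,3) \<open>0 < k\<close>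
    by (rule ratio_le_of_rate_bounds)
  also have "\<dots> = X / (1 + k * R * X * (t - \<delta>)) * (1 + k * decay_rate * t)" by simp
  also have "\<dots> \<le> norm (u t) powr k * (1 + k * decay_rate * t)"
    using \<open>0 < k\<close> assms(2,3) decay_rate_nonneg by (intro mult_right_mono[OF lower]) auto
  also have "\<dots> = (norm (u t) / a_fun p decay_rate t) powr k"
    using assms(1,2,3) profile_pos[of t] decay_rate_nonneg
    by (simp add: powr_divide a_fun_powr k_def)
  finally show ?thesis by (simp add: X_def R_def k_def)
qed simp

lemma profile_antimono_p2:
  assumes "p = 2" "0 \<le> s" "s \<le> t"
  shows "norm (u t) / a_fun p decay_rate t \<le> norm (u s) / a_fun p decay_rate s"
proof -
  have "norm f powr (p - 2) = 1" using initial assms(1) by (simp add: H0_def)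
  then have "decay_rate = lam1" by (simp add: decay_rate_def)
  then have a: "x / a_fun p decay_rate r = x * exp (lam1 * r)" for x r
    unfolding a_fun_def if_P[OF assms(1)] by (simp add: exp_minus divide_inverse)
  have "norm (u t) \<le> norm (u s) * exp (- lam1 * (t - s))"
    using norm_flow_le_bernoulli[OF assms(2,3)] assms(1)
    by (cases "u s = 0") (simp_all add: bernoulli_solution_def a_fun_def)
  then have "norm (u t) * exp (lam1 * t) \<le> norm (u s) * exp (- lam1 * (t - s)) * exp (lam1 * t)"
    by (rule mult_right_mono) simp
  then show ?thesis by (simp add: a mult.assoc flip: exp_add) (simp add: algebra_simps)
qed

end

theorem lemma4:
  fixes J :: "'a::{real_inner, complete_space} \<Rightarrow> ereal"
    and p :: real and f :: 'a and u :: "real \<Rightarrow> 'a"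
  assumes conv: "convex_fun J" and lsc: "lsc_fun J" and prp: "proper_fun J"
    and dense: "closure (dom_fun J) = UNIV"
    and hom: "abs_homogeneous p J"
    and coerc: "0 < lambda1 p J"
    and p2: "p \<ge> 2"
    and f: "f \<in> H0 J"
    and flow: "gradient_flow J f u"
  defines "lam \<equiv> real_of_ereal (lambda1 p J) * norm f powr (p - 2)"
  defines "w \<equiv> (\<lambda>t. (1 / a_fun p lam t) *\<^sub>R u t)"
  shows "(p > 2 \<longrightarrow>
           (\<forall>\<delta>>0. \<forall>t\<ge>\<delta>.
              real_of_ereal (lambda1 p J) * norm (u \<delta>) powr (p - 2) / rayleigh p J (u \<delta>)
                \<le> norm (w t) powr (p - 2)
              \<and> norm (w t) powr (p - 2) \<le> norm f powr (p - 2))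
         \<and> (J f < \<infinity> \<longrightarrow> (\<forall>t\<ge>0.
              real_of_ereal (lambda1 p J) * norm f powr (p - 2) / rayleigh p J f
                \<le> norm (w t) powr (p - 2)
              \<and> norm (w t) powr (p - 2) \<le> norm f powr (p - 2))))
       \<and> (p = 2 \<longrightarrow>
           (\<forall>s t. 0 \<le> s \<and> s \<le> t \<longrightarrow> norm (w t) \<le> norm (w s))
         \<and> (\<forall>t\<ge>0. norm (w t) \<le> norm (w 0) \<and> norm (w 0) = norm f))"
proof -
  txt \<open>The density of the domain only matters for the existence of the flow, which is assumed.\<close>
  interpret coercive_gradient_flow J p f u
    using assms by unfold_locales auto
  have "lam = decay_rate" by (simp add: lam_def decay_rate_def lam1_def)
  then have norm_w: "norm (w t) = norm (u t) / a_fun p decay_rate t" if "0 \<le> t" for t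
    using profile_pos[OF that] by (simp add: w_def)
  have upper: "norm (w t) powr (p - 2) \<le> norm f powr (p - 2)" if "2 < p" "0 \<le> t" for t
    using profile_le_initial[of t] that by (intro powr_mono2) (auto simp: norm_w[symmetric])
  have lower: "lam1 * norm (u \<delta>) powr (p - 2) / rayleigh p J (u \<delta>) \<le> norm (w t) powr (p - 2)"
    if "2 < p" "0 \<le> \<delta>" "\<delta> \<le> t" "J (u \<delta>) \<noteq> \<infinity>" for \<delta> t
    using profile_lower_bound[OF that] that by (simp add: norm_w)
  have antimono: "norm (w t) \<le> norm (w s)" if "p = 2" "0 \<le> s" "s \<le> t" for s t
    using profile_antimono_p2[OF that] that by (simp add: norm_w)
  have "norm (w 0) = norm f" by (simp add: norm_w a_fun_zero flow_start)
  then show ?thesis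
    unfolding lam1_def[symmetric]
    using upper lower[where \<delta> = 0, unfolded flow_start] lower[OF _ less_imp_le _ J_flow_finite] antimono[of 0]
    by (auto simp: flow_start intro: antimono)
qed

end
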